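(* Let $\mathbf{k}$ be an arbitrary field and $\sigma\subset N_{\mathbb{Q}}$ a nonzero strongly convex polyhedral cone. Every nontrivial homogeneous LFIHD $\partial$ on $\mathbf{k}[\sigma^\vee\cap M]$ is of the following form: there are a Demazure root $e$ of $\sigma$ with distinguished ray $\rho$ and $\lambda\in\mathbf{k}^*$ such that for all $i\in\mathbb{N}$ and $m\in\sigma^\vee\cap M$, $\partial^{(i)}(\chi^m)=\lambda^i\binom{\langle m,\rho\rangle}{i}\chi^{m+ie}$ (with $\binom{a}{b}=0$ for $a<b$). Conversely, each such pair $(e,\lambda)$ defines a nontrivial homogeneous LFIHD of degree $e$.
   Context: An LFIHD on a $\mathbf{k}$-algebra $A$ is a sequence $(\partial^{(i)})_{i\in\mathbb{N}}$ of $\mathbf{k}$-linear maps with $\partial^{(0)}=\mathrm{id}$, the Leibniz rule $\partial^{(i)}(fg)=\sum_{j=0}^i\partial^{(j)}(f)\partial^{(i-j)}(g)$, local finiteness (for each $f$, $\partial^{(i)}(f)=0$ for $i\gg0$), and iterativity $\partial^{(i)}\circ\partial^{(j)}=\binom{i+j}{i}\partial^{(i+j)}$; it corresponds to a $\mathbb{G}_a$-action on $\operatorname{Spec}A$. It is trivial if all $\partial^{(i)}$, $i>0$, vanish. For $M$-graded $A$, it is homogeneous of degree $e\in M$ if $\partial^{(i)}(A_m)\subset A_{m+ie}$. A Demazure root of $\sigma$ is $e\in M$ with a ray $\rho$ of $\sigma$ (identified with its primitive vector) such that $\langle e,\rho\rangle=-1$ and $\langle e,\rho'\rangle\ge0$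 for all other rays $\rho'$; $\rho$ is the distinguished ray. *)

theory Defs
  imports "HOL-Library.Poly_Mapping" "HOL-Analysis.Finite_Cartesian_Product"
begin

text \<open>Lattice N = Z^n (type int^'n), dual lattice M = Z^n with the standard pairing;
  N_Q = Q^n (type rat^'n).\<close>

definition ivec_to_rat :: "int^'n \<Rightarrow> rat^'n" where
  "ivec_to_rat v = (\<chi> i. of_int (v $ i))"

definition pair_MNQ :: "int^'n \<Rightarrow> rat^'n \<Rightarrow> rat" where
  "pair_MNQ m u = (\<Sum>i\<in>UNIV. of_int (m $ i) * u $ i)"

definition pair_MN :: "int^'n \<Rightarrow> int^'n \<Rightarrow> int" where
  "pair_MN m u = (\<Sum>i\<in>UNIV. m $ i * u $ i)"

definition pair_QQ :: "rat^'n \<Rightarrow> rat^'n \<Rightarrow> rat" where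
  "pair_QQ m u = (\<Sum>i\<in>UNIV. m $ i * u $ i)"

definition polyhedral_cone :: "(rat^'n) set \<Rightarrow> bool" where
  "polyhedral_cone \<sigma> \<longleftrightarrow> (\<exists>G. finite G \<and>
      \<sigma> = {(\<Sum>g\<in>G. c g *s g) | c. \<forall>g\<in>G. c g \<ge> 0})"

definition strongly_convex :: "(rat^'n) set \<Rightarrow> bool" where
  "strongly_convex \<sigma> \<longleftrightarrow> \<sigma> \<inter> uminus ` \<sigma> = {0}"

definition dual_cone :: "(rat^'n) set \<Rightarrow> (rat^'n) set" where
  "dual_cone \<sigma> = {m. \<forall>u\<in>\<sigma>. pair_QQ m u \<ge> 0}"

definition dual_lattice_points :: "(rat^'n) set \<Rightarrow> (int^'n) set" where
  "dual_lattice_points \<sigma> = {m. \<forall>u\<in>\<sigma>. pair_MNQ m u \<ge> 0}"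

definition primitive :: "int^'n \<Rightarrow> bool" where
  "primitive v \<longleftrightarrow> v \<noteq> 0 \<and> (\<forall>(k::int) w. v = k *s w \<longrightarrow> \<bar>k\<bar> = 1)"

text \<open>A ray of \<sigma> (one-dimensional face), identified with its primitive lattice generator.\<close>
definition is_ray :: "(rat^'n) set \<Rightarrow> int^'n \<Rightarrow> bool" where
  "is_ray \<sigma> \<rho> \<longleftrightarrow> primitive \<rho> \<and>
     (\<exists>m\<in>dual_cone \<sigma>. \<sigma> \<inter> {u. pair_QQ m u = 0} = {t *s ivec_to_rat \<rho> | t. t \<ge> 0})"

definition demazure_root :: "(rat^'n) set \<Rightarrow> int^'n \<Rightarrow> int^'n \<Rightarrow> bool" where
  "demazure_root \<sigma> e \<rho> \<longleftrightarrow> is_ray \<sigma> \<rho> \<and> pair_MN e \<rho> = -1 \<and>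
     (\<forall>\<rho>'. is_ray \<sigma> \<rho>' \<and> \<rho>' \<noteq> \<rho> \<longrightarrow> pair_MN e \<rho>' \<ge> 0)"

text \<open>The algebra k[S] for S = \<sigma>^\<or> \<inter> M is the subalgebra of the group algebra
  k[M] (finitely supported functions M -> k) of elements supported in S.\<close>
definition semigroup_alg :: "(int^'n) set \<Rightarrow> (int^'n \<Rightarrow>\<^sub>0 'k::field) set" where
  "semigroup_alg S = {f. Poly_Mapping.keys f \<subseteq> S}"

definition chi :: "int^'n \<Rightarrow> (int^'n \<Rightarrow>\<^sub>0 'k::field)" where
  "chi m = Poly_Mapping.single m 1"

definition scal :: "'k::field \<Rightarrow> (int^'n \<Rightarrow>\<^sub>0 'k) \<Rightarrow> (int^'n \<Rightarrow>\<^sub>0 'k)" where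
  "scal c f = Poly_Mapping.single 0 c * f"

text \<open>Locally finite iterative higher derivation on k[S]; the maps are only relevant on k[S].\<close>
definition LFIHD :: "(int^'n) set \<Rightarrow> (nat \<Rightarrow> (int^'n \<Rightarrow>\<^sub>0 'k::field) \<Rightarrow> (int^'n \<Rightarrow>\<^sub>0 'k)) \<Rightarrow> bool" where
  "LFIHD S D \<longleftrightarrow>
     (\<forall>i. \<forall>f\<in>semigroup_alg S. D i f \<in> semigroup_alg S) \<and>
     (\<forall>i. \<forall>f\<in>semigroup_alg S. \<forall>g\<in>semigroup_alg S. D i (f + g) = D i f + D i g) \<and>
     (\<forall>i c. \<forall>f\<in>semigroup_alg S. D i (scal c f) = scal c (D i f)) \<and>
     (\<forall>f\<in>semigroup_alg S. D 0 f = f) \<and>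
     (\<forall>i. \<forall>f\<in>semigroup_alg S. \<forall>g\<in>semigroup_alg S.
         D i (f * g) = (\<Sum>j\<le>i. D j f * D (i - j) g)) \<and>
     (\<forall>f\<in>semigroup_alg S. finite {i. D i f \<noteq> 0}) \<and>
     (\<forall>i j. \<forall>f\<in>semigroup_alg S. D i (D j f) = scal (of_nat ((i + j) choose i)) (D (i + j) f))"

definition trivial_HD :: "(int^'n) set \<Rightarrow> (nat \<Rightarrow> (int^'n \<Rightarrow>\<^sub>0 'k::field) \<Rightarrow> (int^'n \<Rightarrow>\<^sub>0 'k)) \<Rightarrow> bool" where
  "trivial_HD S D \<longleftrightarrow> (\<forall>i>0. \<forall>f\<in>semigroup_alg S. D i f = 0)"

definition homogeneous_of_degree :: "(int^'n) set \<Rightarrow> (nat \<Rightarrow> (int^'n \<Rightarrow>\<^sub>0 'k::field) \<Rightarrow> (int^'n \<Rightarrow>\<^sub>0 'k)) \<Rightarrow> int^'n \<Rightarrow> bool" where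
  "homogeneous_of_degree S D e \<longleftrightarrow>
     (\<forall>i. \<forall>m\<in>S. Poly_Mapping.keys (D i (chi m)) \<subseteq> {m + int i *s e})"

end

theory Submission
  imports Defs "HOL-Computational_Algebra.Polynomial"
begin

text \<open>A homogeneous LFIHD of degree \<open>e\<close> acts by \<open>\<partial>\<^sup>(\<^sup>i\<^sup>) \<chi>\<^sup>m = a\<^sub>i(m) \<chi>\<^sup>m\<^sup>+\<^sup>i\<^sup>e\<close>, and the Leibniz rule
  makes \<open>m \<mapsto> P\<^sub>m = \<Sum>\<^sub>i a\<^sub>i(m) t\<^sup>i\<close> a monoid homomorphism from the semigroup \<open>S\<close> of lattice
  points of the dual cone into \<open>k[t]\<close>. Hence \<open>N(m) = deg P\<^sub>m\<close> is additive, and since \<open>S\<close> contains an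
  interior point it extends to a linear form \<open>\<langle>-, v\<rangle>\<close>. Iterativity shows that \<open>m + N(m) e\<close> lies
  in \<open>S\<close> again, with \<open>P = 1\<close>. Testing this against lattice points on the faces of the dual cone
  (obtained from Farkas' lemma and the functionals exposing a minimal system of generators of
  \<open>\<sigma>\<close>) forces \<open>v\<close> to be a ray \<open>\<rho>\<close> with \<open>\<langle>e, \<rho>\<rangle> = -1\<close> and \<open>\<langle>e, \<rho>'\<rangle> \<ge> 0\<close> on all other rays. For
  \<open>m\<^sub>1\<close> with \<open>\<langle>m\<^sub>1, \<rho>\<rangle> = 1\<close> one gets \<open>P\<^sub>m\<^sub>1 = 1 + \<lambda> t\<close> and \<open>P\<^sub>m\<^sub>1\<^sub>+\<^sub>e = 1\<close>, whence
  \<open>P\<^sub>m = (1 + \<lambda> t)\<^sup>\<langle>\<^sup>m\<^sup>,\<^sup>\<rho>\<^sup>\<rangle>\<close>. Conversely, the displayed formulas define an LFIHD by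
  Vandermonde's identity and \<open>(a choose j) (a - j choose i) = (i + j choose i) (a choose i + j)\<close>.\<close>

section \<open>Farkas' lemma over the rationals\<close>

lemma pair_QQ_add_left: "pair_QQ (x + y) z = pair_QQ x z + pair_QQ y z"
  unfolding pair_QQ_def by (simp add: distrib_right sum.distrib)

lemma pair_QQ_add_right: "pair_QQ z (x + y) = pair_QQ z x + pair_QQ z y"
  unfolding pair_QQ_def by (simp add: distrib_left sum.distrib)

lemma pair_QQ_diff_left: "pair_QQ (x - y) z = pair_QQ x z - pair_QQ y z"
  unfolding pair_QQ_def by (simp add: left_diff_distrib sum_subtractf)

lemma pair_QQ_diff_right: "pair_QQ z (x - y) = pair_QQ z x - pair_QQ z y"
  unfolding pair_QQ_def by (simp add: right_diff_distrib sum_subtractf)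

lemma pair_QQ_minus_left: "pair_QQ (- x) z = - pair_QQ x z"
  unfolding pair_QQ_def by (simp add: sum_negf)

lemma pair_QQ_minus_right: "pair_QQ z (- x) = - pair_QQ z x"
  unfolding pair_QQ_def by (simp add: sum_negf)

lemma pair_QQ_scale_left: "pair_QQ (c *s x) z = c * pair_QQ x z"
  unfolding pair_QQ_def by (simp add: sum_distrib_left algebra_simps)

lemma pair_QQ_scale_right: "pair_QQ z (c *s x) = c * pair_QQ z x"
  unfolding pair_QQ_def by (simp add: sum_distrib_left algebra_simps)

lemma pair_QQ_sum_left: "pair_QQ (\<Sum>i\<in>I. f i) z = (\<Sum>i\<in>I. pair_QQ (f i) z)"
  unfolding pair_QQ_def by (simp add: sum_distrib_right sum.swap[of _ UNIV])

lemma pair_QQ_sum_right: "pair_QQ z (\<Sum>i\<in>I. f i) = (\<Sum>i\<in>I. pair_QQ z (f i))"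
  unfolding pair_QQ_def by (simp add: sum_distrib_left sum.swap[of _ UNIV])

lemma pair_QQ_zero_left [simp]: "pair_QQ 0 z = 0"
  unfolding pair_QQ_def by simp

lemmas pair_QQ_linear =
  pair_QQ_add_left pair_QQ_add_right pair_QQ_diff_left pair_QQ_diff_right
  pair_QQ_minus_left pair_QQ_minus_right pair_QQ_scale_left pair_QQ_scale_right
  pair_QQ_sum_left pair_QQ_sum_right

lemma pair_QQ_self_pos:
  assumes "(x :: rat^'n) \<noteq> 0"
  shows "pair_QQ x x > 0"
proof -
  obtain j where j: "x $ j \<noteq> 0"
    using assms by (auto simp: vec_eq_iff)
  have "0 < x $ j * x $ j"
    using j by (metis mult_pos_pos mult_neg_neg linorder_neq_iff)
  also have "\<dots> \<le> (\<Sum>i\<in>UNIV. x $ i * x $ i)"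
    by (rule member_le_sum) auto
  finally show ?thesis
    unfolding pair_QQ_def .
qed

text \<open>Fourier--Motzkin elimination of the vector \<open>v a\<close> along the separating functional \<open>y\<close>
  preserves infeasibility.\<close>

lemma farkas_elimination_infeasible:
  fixes v :: "'i \<Rightarrow> rat^'n"
  assumes "finite I" "a \<notin> I"
    and y: "\<forall>i\<in>I. pair_QQ y (v i) \<ge> 0" "pair_QQ y b < 0" "pair_QQ y (v a) < 0"
    and infeasible: "\<And>c. \<forall>i\<in>insert a I. c i \<ge> 0 \<Longrightarrow> b \<noteq> (\<Sum>i\<in>insert a I. c i *s v i)"
    and c: "\<forall>i\<in>I. c i \<ge> 0"
  shows "b - (pair_QQ y b / pair_QQ y (v a)) *s v a
           \<noteq> (\<Sum>i\<in>I. c i *s (v i - (pair_QQ y (v i) / pair_QQ y (v a)) *s v a))"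
proof
  define \<alpha> where "\<alpha> = pair_QQ y (v a)"
  assume eq: "b - (pair_QQ y b / pair_QQ y (v a)) *s v a
                = (\<Sum>i\<in>I. c i *s (v i - (pair_QQ y (v i) / pair_QQ y (v a)) *s v a))"
  define \<mu> where "\<mu> = (pair_QQ y b - (\<Sum>i\<in>I. c i * pair_QQ y (v i))) / \<alpha>"
  have "(\<Sum>i\<in>I. c i * pair_QQ y (v i)) \<ge> 0"
    using c y(1) by (intro sum_nonneg) auto
  then have \<mu>: "\<mu> > 0"
    unfolding \<mu>_def \<alpha>_def using y(2,3) by (simp add: divide_neg_neg)
  have "b = (\<Sum>i\<in>I. c i *s v i) + \<mu> *s v a"
  proof -
    have "b = (\<Sum>i\<in>I. c i *s v i) - (\<Sum>i\<in>I. c i * pair_QQ y (v i) / \<alpha>) *s v a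
              + (pair_QQ y b / \<alpha>) *s v a"
      using eq unfolding \<alpha>_def[symmetric]
      by (simp add: vec_eq_iff sum_subtractf algebra_simps sum_distrib_right sum_distrib_left
          sum_divide_distrib)
    then show ?thesis
      unfolding \<mu>_def by (simp add: vec_eq_iff algebra_simps sum_divide_distrib diff_divide_distrib)
  qed
  also have "\<dots> = (\<Sum>i\<in>insert a I. (c(a := \<mu>)) i *s v i)"
  proof -
    have "(\<Sum>i\<in>I. (c(a := \<mu>)) i *s v i) = (\<Sum>i\<in>I. c i *s v i)"
      using assms(2) by (intro sum.cong) auto
    then show ?thesis
      using assms(1,2) by (simp add: add.commute)
  qed
  finally have "b = (\<Sum>i\<in>insert a I. (c(a := \<mu>)) i *s v i)" .
  moreover have "\<forall>i\<in>insert a I. (c(a := \<mu>)) i \<ge> 0"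
    using c \<mu> by auto
  ultimately show False
    using infeasible by blast
qed

lemma farkas_lemma:
  fixes v :: "'i \<Rightarrow> rat^'n"
  assumes "finite I"
    and "\<And>c. \<forall>i\<in>I. c i \<ge> 0 \<Longrightarrow> b \<noteq> (\<Sum>i\<in>I. c i *s v i)"
  shows "\<exists>y. (\<forall>i\<in>I. pair_QQ y (v i) \<ge> 0) \<and> pair_QQ y b < 0"
  using assms
proof (induction I arbitrary: v b rule: finite_induct)
  case empty
  then have "b \<noteq> 0"
    by auto
  then show ?case
    by (intro exI[of _ "- b"]) (simp add: pair_QQ_minus_left pair_QQ_self_pos)
next
  case (insert a I)
  have "b \<noteq> (\<Sum>i\<in>I. c i *s v i)" if c: "\<forall>i\<in>I. c i \<ge> 0" for c
  proof -
    have "(\<Sum>i\<in>I. (c(a := 0)) i *s v i) = (\<Sum>i\<in>I. c i *s v i)"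
      using insert.hyps(2) by (intro sum.cong) auto
    then show ?thesis
      using insert.prems[of "c(a := 0)"] insert.hyps c by auto
  qed
  then obtain y0 where y0: "\<forall>i\<in>I. pair_QQ y0 (v i) \<ge> 0" "pair_QQ y0 b < 0"
    using insert.IH by blast
  show ?case
  proof (cases "pair_QQ y0 (v a) \<ge> 0")
    case True
    then show ?thesis
      using y0 by (intro exI[of _ y0]) auto
  next
    case False
    define \<alpha> where "\<alpha> = pair_QQ y0 (v a)"
    define v' where "v' i = v i - (pair_QQ y0 (v i) / \<alpha>) *s v a" for i
    define b' where "b' = b - (pair_QQ y0 b / \<alpha>) *s v a"
    obtain y1 where y1: "\<forall>i\<in>I. pair_QQ y1 (v' i) \<ge> 0" "pair_QQ y1 b' < 0"
      using insert.IH[of b' v'] farkas_elimination_infeasible[OF insert.hyps y0 _ insert.prems]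
        False unfolding v'_def b'_def \<alpha>_def by fastforce
    define y where "y = y1 - (pair_QQ y1 (v a) / \<alpha>) *s y0"
    have "pair_QQ y (v a) = 0"
      unfolding y_def using False by (simp add: pair_QQ_linear \<alpha>_def)
    moreover have "pair_QQ y (v i) = pair_QQ y1 (v' i)" for i
      unfolding y_def v'_def by (simp add: pair_QQ_linear algebra_simps)
    moreover have "pair_QQ y b = pair_QQ y1 b'"
      unfolding y_def b'_def by (simp add: pair_QQ_linear algebra_simps)
    ultimately show ?thesis
      using y1 by (intro exI[of _ y]) auto
  qed
qed

lemma sum_mult_neg_imp_neg_factor:
  fixes c f :: "'a \<Rightarrow> 'b::linordered_idom"
  assumes "\<forall>x\<in>A. c x \<ge> 0" "(\<Sum>x\<in>A. c x * f x) < 0"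
  shows "\<exists>x\<in>A. c x > 0 \<and> f x < 0"
proof (rule ccontr)
  assume "\<not> ?thesis"
  then have "\<forall>x\<in>A. c x * f x \<ge> 0"
    using assms(1) by (metis le_less mult_nonneg_nonneg mult_zero_left not_le)
  then show False
    using assms(2) sum_nonneg[of A "\<lambda>x. c x * f x"] by simp
qed

section \<open>Finitely generated cones\<close>

definition gen_cone :: "(rat^'n) set \<Rightarrow> (rat^'n) set" where
  "gen_cone A = {(\<Sum>g\<in>A. c g *s g) | c. \<forall>g\<in>A. c g \<ge> 0}"

lemma polyhedral_cone_iff: "polyhedral_cone \<sigma> \<longleftrightarrow> (\<exists>G. finite G \<and> \<sigma> = gen_cone G)"
  unfolding polyhedral_cone_def gen_cone_def ..

lemma gen_coneI: "\<forall>g\<in>A. c g \<ge> 0 \<Longrightarrow> x = (\<Sum>g\<in>A. c g *s g) \<Longrightarrow> x \<in> gen_cone A"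
  unfolding gen_cone_def by blast

lemma gen_coneE:
  assumes "x \<in> gen_cone A"
  obtains c where "\<forall>g\<in>A. c g \<ge> 0" "x = (\<Sum>g\<in>A. c g *s g)"
  using assms unfolding gen_cone_def by blast

lemma zero_in_gen_cone: "0 \<in> gen_cone A"
  by (rule gen_coneI[of A "\<lambda>_. 0"]) auto

lemma generator_in_gen_cone:
  assumes "finite A" "a \<in> A"
  shows "a \<in> gen_cone A"
proof (rule gen_coneI[of A "\<lambda>x. if x = a then 1 else 0"])
  show "a = (\<Sum>g\<in>A. (if g = a then 1 else 0) *s g)"
    using assms by (simp add: if_distrib[where f = "\<lambda>c. c *s _"] sum.delta cong: if_cong)
qed auto

lemma gen_cone_add:
  assumes "x \<in> gen_cone A" "y \<in> gen_cone A"
  shows "x + y \<in> gen_cone A"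
proof -
  obtain c where c: "\<forall>g\<in>A. c g \<ge> 0" "x = (\<Sum>g\<in>A. c g *s g)"
    using assms(1) by (rule gen_coneE)
  obtain d where d: "\<forall>g\<in>A. d g \<ge> 0" "y = (\<Sum>g\<in>A. d g *s g)"
    using assms(2) by (rule gen_coneE)
  show ?thesis
    by (rule gen_coneI[of A "\<lambda>g. c g + d g"])
      (use c d in \<open>auto simp: vector_sadd_rdistrib sum.distrib\<close>)
qed

lemma gen_cone_scale:
  assumes "x \<in> gen_cone A" "t \<ge> 0"
  shows "t *s x \<in> gen_cone A"
proof -
  obtain c where c: "\<forall>g\<in>A. c g \<ge> 0" "x = (\<Sum>g\<in>A. c g *s g)"
    using assms(1) by (rule gen_coneE)
  show ?thesis
    by (rule gen_coneI[of A "\<lambda>g. t * c g"])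
      (use c assms(2) in \<open>auto simp: vec_eq_iff sum_distrib_left mult.assoc\<close>)
qed

lemma gen_cone_sum:
  assumes "finite I" "\<forall>i\<in>I. x i \<in> gen_cone A"
  shows "(\<Sum>i\<in>I. x i) \<in> gen_cone A"
  using assms by (induction I rule: finite_induct) (auto intro: gen_cone_add zero_in_gen_cone)

lemma gen_cone_subset:
  assumes "finite B" "B \<subseteq> gen_cone A"
  shows "gen_cone B \<subseteq> gen_cone A"
proof
  fix x
  assume "x \<in> gen_cone B"
  then obtain c where c: "\<forall>g\<in>B. c g \<ge> 0" "x = (\<Sum>g\<in>B. c g *s g)"
    by (rule gen_coneE)
  show "x \<in> gen_cone A"
    unfolding c(2) by (rule gen_cone_sum) (use assms c in \<open>auto intro: gen_cone_scale\<close>)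
qed

lemma gen_cone_mono:
  assumes "finite B" "A \<subseteq> B"
  shows "gen_cone A \<subseteq> gen_cone B"
  using assms by (intro gen_cone_subset) (auto intro: generator_in_gen_cone finite_subset)

lemma farkas_gen_cone:
  assumes "finite A" "b \<notin> gen_cone A"
  shows "\<exists>y. (\<forall>a\<in>A. pair_QQ y a \<ge> 0) \<and> pair_QQ y b < 0"
  using farkas_lemma[of A b "\<lambda>x. x"] assms unfolding gen_cone_def by blast

lemma gen_cone_pair_nonneg:
  assumes "\<forall>a\<in>A. pair_QQ y a \<ge> 0" "u \<in> gen_cone A"
  shows "pair_QQ y u \<ge> 0"
proof -
  obtain c where c: "\<forall>g\<in>A. c g \<ge> 0" "u = (\<Sum>g\<in>A. c g *s g)"
    using assms(2) by (rule gen_coneE)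
  show ?thesis
    unfolding c(2) using assms(1) c(1) by (simp add: pair_QQ_linear sum_nonneg)
qed

lemma strongly_convex_eq_0:
  assumes "strongly_convex \<sigma>" "u \<in> \<sigma>" "- u \<in> \<sigma>"
  shows "u = 0"
proof -
  have "u \<in> uminus ` \<sigma>"
    using assms(3) by (metis image_eqI minus_minus)
  then show ?thesis
    using assms(1,2) unfolding strongly_convex_def by blast
qed

lemma exists_minimal_generators:
  assumes "finite G"
  shows "\<exists>G'\<subseteq>G. gen_cone G' = gen_cone G \<and> (\<forall>g\<in>G'. g \<notin> gen_cone (G' - {g}))"
  using assms
proof (induction "card G" arbitrary: G rule: less_induct)
  case less
  show ?case
  proof (cases "\<forall>g\<in>G. g \<notin> gen_cone (G - {g})")
    case False
    then obtain g where g: "g \<in> G" "g \<in> gen_cone (G - {g})"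
      by blast
    have "G \<subseteq> gen_cone (G - {g})"
      using g less.prems by (auto intro: generator_in_gen_cone)
    then have eq: "gen_cone (G - {g}) = gen_cone G"
      using less.prems by (intro equalityI gen_cone_mono gen_cone_subset) auto
    have "card (G - {g}) < card G"
      using g less.prems by (metis card_Diff1_less)
    then show ?thesis
      using less.hyps[of "G - {g}"] less.prems eq by fastforce
  qed blast
qed

lemma neg_generator_notin_generators:
  assumes "finite G" "strongly_convex (gen_cone G)" "\<forall>h\<in>G. h \<notin> gen_cone (G - {h})" "g \<in> G"
  shows "- g \<notin> G"
proof
  assume "- g \<in> G"
  then have "g = 0"
    using assms by (metis strongly_convex_eq_0 generator_in_gen_cone)
  then show False
    using assms(3,4) zero_in_gen_cone by metis
qed

text \<open>Via Farkas' lemma, this yields the functionals exposing \<open>g\<close>.\<close>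

lemma neg_generator_notin_gen_cone_insert_neg:
  assumes fin: "finite G" and sc: "strongly_convex (gen_cone G)"
    and minimal: "\<forall>h\<in>G. h \<notin> gen_cone (G - {h})" and g: "g \<in> G" and h: "h \<in> G - {g}"
  shows "- h \<notin> gen_cone (insert (- g) G)"
proof
  have neg_g: "- g \<notin> G"
    using neg_generator_notin_generators[OF fin sc minimal g] .
  assume "- h \<in> gen_cone (insert (- g) G)"
  then obtain c where c: "\<forall>x\<in>insert (- g) G. c x \<ge> 0" "- h = (\<Sum>x\<in>insert (- g) G. c x *s x)"
    by (rule gen_coneE)
  define T where "T = (\<Sum>x\<in>G - {g}. c x *s x)"
  have T: "T \<in> gen_cone (G - {g})"
    unfolding T_def by (rule gen_coneI[of _ c]) (use c in auto)
  have "(\<Sum>x\<in>insert (- g) G. c x *s x) = c (- g) *s (- g) + (c g *s g + T)"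
    using neg_g fin g unfolding T_def by (simp add: sum.remove)
  then have h_eq: "h = - (c (- g) *s (- g) + (c g *s g + T))"
    using c(2) by (metis minus_minus)
  show False
  proof (cases "c (- g) - c g > 0")
    case True
    have "g = (1 / (c (- g) - c g)) *s (h + T)"
      using True unfolding h_eq by (simp add: vec_eq_iff field_simps)
    moreover have "h + T \<in> gen_cone (G - {g})"
      using h fin T by (intro gen_cone_add[OF generator_in_gen_cone]) auto
    ultimately have "g \<in> gen_cone (G - {g})"
      using True gen_cone_scale[of "h + T" "G - {g}" "1 / (c (- g) - c g)"] by simp
    then show False
      using minimal g by blast
  next
    case False
    have "- h = T + (c g - c (- g)) *s g"
      unfolding h_eq by (simp add: vec_eq_iff algebra_simps)
    moreover have "T \<in> gen_cone G"
      using T fin gen_cone_mono[of G "G - {g}"] by auto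
    moreover have "(c g - c (- g)) *s g \<in> gen_cone G"
      using False fin g by (intro gen_cone_scale generator_in_gen_cone) auto
    ultimately have "- h \<in> gen_cone G"
      by (simp add: gen_cone_add)
    moreover have "h \<in> gen_cone G"
      using fin h by (intro generator_in_gen_cone) auto
    ultimately have "h = 0"
      using sc strongly_convex_eq_0 by blast
    then show False
      using minimal h zero_in_gen_cone by (metis DiffD1)
  qed
qed

lemma exposing_functional:
  assumes fin: "finite G" and sc: "strongly_convex (gen_cone G)"
    and minimal: "\<forall>h\<in>G. h \<notin> gen_cone (G - {h})" and g: "g \<in> G"
  shows "\<exists>m. (\<forall>x\<in>G. pair_QQ m x \<ge> 0) \<and> pair_QQ m g = 0 \<and> (\<forall>h\<in>G - {g}. pair_QQ m h > 0)"
proof -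
  have "\<exists>y. (\<forall>x\<in>insert (- g) G. pair_QQ y x \<ge> 0) \<and> pair_QQ y (- h) < 0" if "h \<in> G - {g}" for h
    using fin neg_generator_notin_gen_cone_insert_neg[OF assms that] by (intro farkas_gen_cone) auto
  then obtain Y where Y: "\<And>h. h \<in> G - {g} \<Longrightarrow>
      (\<forall>x\<in>insert (- g) G. pair_QQ (Y h) x \<ge> 0) \<and> pair_QQ (Y h) (- h) < 0"
    by metis
  have Yx: "pair_QQ (Y h) x \<ge> 0" if "h \<in> G - {g}" "x \<in> G" for h x
    using Y that by auto
  have Yg: "pair_QQ (Y h) g = 0" if "h \<in> G - {g}" for h
    using Y[OF that] g by (auto simp: pair_QQ_minus_right)
  have Yh: "pair_QQ (Y h) h > 0" if "h \<in> G - {g}" for h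
    using Y[OF that] by (simp add: pair_QQ_minus_right)
  show ?thesis
  proof (intro exI[of _ "\<Sum>h\<in>G - {g}. Y h"] conjI ballI)
    show "pair_QQ (\<Sum>h\<in>G - {g}. Y h) x \<ge> 0" if "x \<in> G" for x
      unfolding pair_QQ_sum_left using Yx that by (intro sum_nonneg) auto
    show "pair_QQ (\<Sum>h\<in>G - {g}. Y h) g = 0"
      unfolding pair_QQ_sum_left using Yg by simp
    show "pair_QQ (\<Sum>h\<in>G - {g}. Y h) h > 0" if h: "h \<in> G - {g}" for h
    proof -
      have "pair_QQ (Y h) h \<le> (\<Sum>h'\<in>G - {g}. pair_QQ (Y h') h)"
        by (rule member_le_sum) (use h fin Yx in auto)
      then show ?thesis
        unfolding pair_QQ_sum_left using Yh[OF h] by simp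
    qed
  qed
qed

lemma interior_functional:
  assumes fin: "finite G" and sc: "strongly_convex (gen_cone G)" and "0 \<notin> G"
  shows "\<exists>m. \<forall>x\<in>G. pair_QQ m x > 0"
proof -
  have "\<exists>y. (\<forall>x\<in>G. pair_QQ y x \<ge> 0) \<and> pair_QQ y (- h) < 0" if h: "h \<in> G" for h
  proof (rule farkas_gen_cone[OF fin])
    show "- h \<notin> gen_cone G"
      using strongly_convex_eq_0[OF sc generator_in_gen_cone[OF fin h]] \<open>0 \<notin> G\<close> h by auto
  qed
  then obtain Y where Y: "\<And>h. h \<in> G \<Longrightarrow> (\<forall>x\<in>G. pair_QQ (Y h) x \<ge> 0) \<and> pair_QQ (Y h) (- h) < 0"
    by metis
  show ?thesis
  proof (intro exI[of _ "\<Sum>h\<in>G. Y h"] ballI)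
    fix h
    assume h: "h \<in> G"
    have "pair_QQ (Y h) h \<le> (\<Sum>h'\<in>G. pair_QQ (Y h') h)"
      by (rule member_le_sum) (use h fin Y in auto)
    then show "pair_QQ (\<Sum>h\<in>G. Y h) h > 0"
      unfolding pair_QQ_sum_left using Y[OF h] by (simp add: pair_QQ_minus_right)
  qed
qed

lemma gen_cone_face_exposed_generator:
  assumes fin: "finite G" and g: "g \<in> G"
    and m: "\<forall>x\<in>G. pair_QQ m x \<ge> 0" "pair_QQ m g = 0" "\<forall>h\<in>G - {g}. pair_QQ m h > 0"
  shows "gen_cone G \<inter> {u. pair_QQ m u = 0} = {s *s g |s. s \<ge> 0}"
proof
  show "gen_cone G \<inter> {u. pair_QQ m u = 0} \<subseteq> {s *s g |s. s \<ge> 0}"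
  proof
    fix u
    assume u: "u \<in> gen_cone G \<inter> {u. pair_QQ m u = 0}"
    then obtain c where c: "\<forall>x\<in>G. c x \<ge> 0" "u = (\<Sum>x\<in>G. c x *s x)"
      by (blast elim: gen_coneE)
    have "(\<Sum>x\<in>G. c x * pair_QQ m x) = 0"
      using u c(2) by (simp add: pair_QQ_linear)
    moreover have "(\<Sum>x\<in>G. c x * pair_QQ m x) = 0 \<longleftrightarrow> (\<forall>x\<in>G. c x * pair_QQ m x = 0)"
      by (rule sum_nonneg_eq_0_iff[OF fin]) (use c(1) m(1) in simp)
    ultimately have "\<forall>x\<in>G. c x * pair_QQ m x = 0"
      by blast
    then have "c x = 0" if "x \<in> G - {g}" for x
      using m(3) that by (metis DiffD1 less_numeral_extra(3) mult_eq_0_iff)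
    then have "(\<Sum>x\<in>G - {g}. c x *s x) = 0"
      by (intro sum.neutral) auto
    then have "u = c g *s g"
      using c(2) g fin by (simp add: sum.remove)
    then show "u \<in> {s *s g |s. s \<ge> 0}"
      using c(1) g by auto
  qed
  show "{s *s g |s. s \<ge> 0} \<subseteq> gen_cone G \<inter> {u. pair_QQ m u = 0}"
    using m(2) generator_in_gen_cone[OF fin g] by (auto simp: gen_cone_scale pair_QQ_scale_right)
qed

section \<open>Lattice vectors\<close>

lemma ivec_to_rat_nth [simp]: "ivec_to_rat v $ i = of_int (v $ i)"
  unfolding ivec_to_rat_def by simp

lemma ivec_to_rat_add: "ivec_to_rat (a + b) = ivec_to_rat a + ivec_to_rat b"
  by (simp add: vec_eq_iff)

lemma ivec_to_rat_diff: "ivec_to_rat (a - b) = ivec_to_rat a - ivec_to_rat b"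
  by (simp add: vec_eq_iff)

lemma ivec_to_rat_scale: "ivec_to_rat (k *s a) = of_int k *s ivec_to_rat a"
  by (simp add: vec_eq_iff)

lemma ivec_to_rat_zero [simp]: "ivec_to_rat 0 = 0"
  by (simp add: vec_eq_iff)

lemma ivec_to_rat_inject: "ivec_to_rat a = ivec_to_rat b \<longleftrightarrow> a = b"
  by (simp add: vec_eq_iff)

lemma ivec_to_rat_eq_0_iff [simp]: "ivec_to_rat a = 0 \<longleftrightarrow> a = 0"
  by (simp add: vec_eq_iff)

lemmas ivec_to_rat_linear = ivec_to_rat_add ivec_to_rat_diff ivec_to_rat_scale

lemma pair_MNQ_eq: "pair_MNQ m u = pair_QQ (ivec_to_rat m) u"
  unfolding pair_MNQ_def pair_QQ_def by simp

lemma of_int_pair_MN: "of_int (pair_MN a b) = pair_QQ (ivec_to_rat a) (ivec_to_rat b)"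
  unfolding pair_MN_def pair_QQ_def by simp

lemma pair_MN_add_left: "pair_MN (a + b) c = pair_MN a c + pair_MN b c"
  unfolding pair_MN_def by (simp add: distrib_right sum.distrib)

lemma pair_MN_diff_left: "pair_MN (a - b) c = pair_MN a c - pair_MN b c"
  unfolding pair_MN_def by (simp add: left_diff_distrib sum_subtractf)

lemma pair_MN_scale_left: "pair_MN (k *s a) c = k * pair_MN a c"
  unfolding pair_MN_def by (simp add: sum_distrib_left algebra_simps)

lemmas pair_MN_linear = pair_MN_add_left pair_MN_diff_left pair_MN_scale_left

lemma exists_common_denominator:
  assumes "finite (A :: rat set)"
  shows "\<exists>K::int. K > 0 \<and> (\<forall>q\<in>A. of_int K * q \<in> \<int>)"
  using assms
proof (induction A rule: finite_induct)
  case empty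
  then show ?case
    by (intro exI[of _ 1]) auto
next
  case (insert q A)
  then obtain K where K: "K > 0" "\<forall>r\<in>A. of_int K * r \<in> \<int>"
    by blast
  obtain n d where nd: "quotient_of q = (n, d)"
    by (cases "quotient_of q")
  have d: "d > 0"
    using nd by (rule quotient_of_denom_pos)
  have q: "q = of_int n / of_int d"
    using nd by (rule quotient_of_div)
  have "of_int (K * d) * r \<in> \<int>" if "r \<in> A" for r
  proof -
    have "of_int d * (of_int K * r) \<in> \<int>"
      using K that by simp
    then show ?thesis
      by (simp add: mult_ac)
  qed
  moreover have "of_int (K * d) * q = of_int (K * n)"
    using d q by simp
  ultimately show ?case
    using K d by (intro exI[of _ "K * d"]) (auto simp del: of_int_mult)
qed

lemma exists_int_multiple_lattice: "\<exists>K::int. K > 0 \<and> (\<exists>z. ivec_to_rat z = of_int K *s (x :: rat^'n))"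
proof -
  obtain K :: int where K: "K > 0" "\<forall>q\<in>range (\<lambda>i. x $ i). of_int K * q \<in> \<int>"
    using exists_common_denominator[of "range (\<lambda>i. x $ i)"] by auto
  have "\<forall>i. \<exists>z. of_int K * x $ i = of_int z"
    using K(2) by (auto elim!: Ints_cases)
  then obtain f where f: "\<And>i. of_int K * x $ i = of_int (f i)"
    by metis
  show ?thesis
    by (intro exI[of _ K] conjI K(1) exI[of _ "\<chi> i. f i"]) (simp add: vec_eq_iff f)
qed

lemma primitive_common_divisor:
  assumes "primitive \<rho>" "\<forall>i. k dvd \<rho> $ i"
  shows "\<bar>k\<bar> = 1"
proof -
  have "\<rho> = k *s (\<chi> i. \<rho> $ i div k)"
    using assms(2) by (simp add: vec_eq_iff)
  then show ?thesis
    using assms(1) unfolding primitive_def by blast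
qed

lemma exists_primitive_divisor:
  assumes "(z :: int^'n) \<noteq> 0"
  shows "\<exists>d \<rho>. d > 0 \<and> primitive \<rho> \<and> z = d *s \<rho>"
proof -
  define d where "d = Gcd (range (\<lambda>i. z $ i))"
  have d_dvd: "d dvd z $ i" for i
    unfolding d_def by (rule Gcd_dvd) auto
  have "d \<noteq> 0" "d \<ge> 0"
    using assms unfolding d_def by (auto simp: vec_eq_iff)
  then have d: "d > 0"
    by simp
  define \<rho> where "\<rho> = (\<chi> i. z $ i div d)"
  have z: "z = d *s \<rho>"
    unfolding \<rho>_def using d_dvd by (simp add: vec_eq_iff)
  have "primitive \<rho>"
    unfolding primitive_def
  proof (intro conjI allI impI)
    show "\<rho> \<noteq> 0"
      using assms z by auto
    fix k :: int and w
    assume "\<rho> = k *s w"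
    then have "k * d dvd z $ i" for i
      using z by (simp add: mult.commute[of k d])
    then have "k * d dvd d"
      unfolding d_def by (intro Gcd_greatest) auto
    then have "k * d dvd 1 * d"
      by simp
    then have "k dvd 1"
      using d by (subst (asm) dvd_mult_cancel_right) auto
    then show "\<bar>k\<bar> = 1"
      by simp
  qed
  then show ?thesis
    using d z by blast
qed

lemma nonzero_eq_pos_multiple_primitive:
  assumes "(x :: rat^'n) \<noteq> 0"
  shows "\<exists>\<rho> t. primitive \<rho> \<and> t > 0 \<and> x = t *s ivec_to_rat \<rho>"
proof -
  obtain K :: int and z where K: "K > 0" "ivec_to_rat z = of_int K *s x"
    using exists_int_multiple_lattice by blast
  have "z \<noteq> 0"
    using K assms by (metis ivec_to_rat_eq_0_iff of_int_0_less_iff order_less_irrefl vector_mul_eq_0)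
  then obtain d \<rho> where d: "d > 0" "primitive \<rho>" "z = d *s \<rho>"
    using exists_primitive_divisor by blast
  have "of_int K *s x = of_int K *s ((of_int d / of_int K) *s ivec_to_rat \<rho>)"
    using K d(3) by (simp add: ivec_to_rat_scale vector_smult_assoc)
  then have "x = (of_int d / of_int K) *s ivec_to_rat \<rho>"
    using K(1) by simp
  then show ?thesis
    using d K(1) by (intro exI[of _ \<rho>] exI[of _ "of_int d / of_int K"]) auto
qed

lemma primitive_pos_multiple_eq:
  assumes "primitive \<rho>" "primitive \<rho>'" "t > 0" "ivec_to_rat \<rho> = t *s ivec_to_rat \<rho>'"
  shows "\<rho> = \<rho>'"
proof -
  obtain p q where pq: "quotient_of t = (p, q)"
    by (cases "quotient_of t")
  have q: "q > 0"
    using pq by (rule quotient_of_denom_pos)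
  have coprime: "coprime p q"
    using pq by (rule quotient_of_coprime)
  have t: "t = of_int p / of_int q"
    using pq by (rule quotient_of_div)
  have p: "p > 0"
    using assms(3) t q by (simp add: zero_less_divide_iff)
  have cross: "q * \<rho> $ i = p * \<rho>' $ i" for i
  proof -
    have "of_int (\<rho> $ i) = t * of_int (\<rho>' $ i)"
      using assms(4) by (metis ivec_to_rat_nth vector_smult_component)
    then have "of_int q * of_int (\<rho> $ i) = of_int p * (of_int (\<rho>' $ i) :: rat)"
      using t q by (simp add: field_simps)
    then show ?thesis
      by (metis of_int_eq_iff of_int_mult)
  qed
  have "p dvd \<rho> $ i" for i
    using cross[of i] coprime by (metis coprime_dvd_mult_right_iff dvd_triv_left)
  then have "p = 1"
    using primitive_common_divisor[OF assms(1)] p by force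
  have "q dvd \<rho>' $ i" for i
    using cross[of i] coprime by (metis coprime_commute coprime_dvd_mult_right_iff dvd_triv_left)
  then have "q = 1"
    using primitive_common_divisor[OF assms(2)] q by force
  show ?thesis
    using cross \<open>p = 1\<close> \<open>q = 1\<close> by (simp add: vec_eq_iff)
qed

lemma exists_nat_multiple_dominates:
  fixes x z :: "rat^'n" and G :: "(rat^'n) set"
  assumes "finite G"
  shows "\<exists>L::nat. \<forall>g\<in>G. pair_QQ z g > 0 \<longrightarrow> pair_QQ x g \<le> of_nat L * pair_QQ z g"
proof -
  obtain L :: nat where L: "Max (insert 0 ((\<lambda>g. pair_QQ x g / pair_QQ z g) ` G)) \<le> of_nat L"
    using real_arch_simple by blast
  have "pair_QQ x g \<le> of_nat L * pair_QQ z g" if "g \<in> G" "pair_QQ z g > 0" for g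
  proof -
    have "pair_QQ x g / pair_QQ z g \<le> of_nat L"
      using L that assms by (meson Max_ge finite_imageI finite_insert image_eqI insertI2 order_trans)
    then show ?thesis
      using that(2) by (simp add: divide_le_eq)
  qed
  then show ?thesis
    by blast
qed

lemma dual_lattice_points_gen_cone_iff:
  assumes "finite G"
  shows "m \<in> dual_lattice_points (gen_cone G) \<longleftrightarrow> (\<forall>g\<in>G. pair_QQ (ivec_to_rat m) g \<ge> 0)"
  using assms generator_in_gen_cone gen_cone_pair_nonneg
  unfolding dual_lattice_points_def pair_MNQ_eq by blast

lemma dual_lattice_points_add:
  "a \<in> dual_lattice_points \<sigma> \<Longrightarrow> b \<in> dual_lattice_points \<sigma> \<Longrightarrow> a + b \<in> dual_lattice_points \<sigma>"
  unfolding dual_lattice_points_def pair_MNQ_eq by (auto simp: ivec_to_rat_add pair_QQ_add_left)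

lemma zero_in_dual_lattice_points: "0 \<in> dual_lattice_points \<sigma>"
  unfolding dual_lattice_points_def pair_MNQ_eq by simp

lemma additive_eq_pair_MN:
  fixes T :: "int^'n \<Rightarrow> int"
  assumes add: "\<And>x y. T (x + y) = T x + T y"
  shows "T x = pair_MN x (\<chi> i. T (axis i 1))"
proof -
  have T0: "T 0 = 0"
    using add[of 0 0] by simp
  have T_nat: "T (int k *s y) = int k * T y" for k y
  proof (induction k)
    case (Suc k)
    have "int (Suc k) *s y = y + int k *s y"
      by (simp add: vector_sadd_rdistrib)
    then show ?case
      using add Suc by (simp add: algebra_simps)
  qed (simp add: T0)
  have T_int: "T (k *s y) = k * T y" for k y
  proof (cases "k \<ge> 0")
    case True
    then show ?thesis
      using T_nat[of "nat k" y] by simp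
  next
    case False
    have "T (k *s y) + T (int (nat (- k)) *s y) = 0"
      using False add[of "k *s y" "int (nat (- k)) *s y"] T0 by (simp add: vector_sadd_rdistrib[symmetric])
    then show ?thesis
      using T_nat[of "nat (- k)" y] False by simp
  qed
  have T_sum: "T (\<Sum>i\<in>A. f i) = (\<Sum>i\<in>A. T (f i))" if "finite A" for A and f :: "'n \<Rightarrow> int^'n"
    using that by (induction A rule: finite_induct) (auto simp: T0 add)
  have "x = (\<Sum>i\<in>UNIV. x $ i *s axis i 1)"
    by (simp add: vec_eq_iff axis_def if_distrib[where f = "\<lambda>c. _ * c"] cong: if_cong)
  then have "T x = (\<Sum>i\<in>UNIV. T (x $ i *s axis i 1))"
    using T_sum by (metis finite_class.finite_UNIV)
  also have "\<dots> = pair_MN x (\<chi> i. T (axis i 1))"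
    unfolding pair_MN_def by (simp add: T_int)
  finally show ?thesis .
qed

lemma additive_add_nat_multiple:
  fixes N :: "int^'n \<Rightarrow> nat"
  assumes closed: "\<And>a b. a \<in> S \<Longrightarrow> b \<in> S \<Longrightarrow> a + b \<in> S"
    and add: "\<And>a b. a \<in> S \<Longrightarrow> b \<in> S \<Longrightarrow> N (a + b) = N a + N b"
    and "z \<in> S" "x \<in> S"
  shows "x + int K *s z \<in> S \<and> N (x + int K *s z) = N x + K * N z"
proof (induction K)
  case (Suc K)
  have "x + int (Suc K) *s z = (x + int K *s z) + z"
    by (simp add: algebra_simps vector_sadd_rdistrib)
  then show ?case
    using Suc closed[of "x + int K *s z" z] add[of "x + int K *s z" z] \<open>z \<in> S\<close>
    by (simp only:) simp
qed (use \<open>x \<in> S\<close> in simp)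

text \<open>The extension is \<open>x \<mapsto> N (x + K z) - K N z\<close>, independently of the choice of \<open>K\<close> with
  \<open>x + K z \<in> S\<close>.\<close>

lemma additive_extends_from_absorbing_monoid:
  fixes N :: "int^'n \<Rightarrow> nat"
  assumes closed: "\<And>a b. a \<in> S \<Longrightarrow> b \<in> S \<Longrightarrow> a + b \<in> S"
    and add: "\<And>a b. a \<in> S \<Longrightarrow> b \<in> S \<Longrightarrow> N (a + b) = N a + N b"
    and z: "z \<in> S" and absorb: "\<And>x. \<exists>K::nat. x + int K *s z \<in> S"
  shows "\<exists>T. (\<forall>x y. T (x + y) = T x + T y) \<and> (\<forall>a\<in>S. T a = int (N a))"
proof -
  note shift = additive_add_nat_multiple[of S N, OF closed add z]
  define K where "K x = (SOME K::nat. x + int K *s z \<in> S)" for x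
  have K: "x + int (K x) *s z \<in> S" for x
    unfolding K_def using absorb by (rule someI_ex)
  define T where "T x = int (N (x + int (K x) *s z)) - int (K x) * int (N z)" for x
  have T: "T x = int (N (x + int L *s z)) - int L * int (N z)" if "x + int L *s z \<in> S" for x L
  proof -
    have "(x + int L *s z) + int (K x) *s z = (x + int (K x) *s z) + int L *s z"
      by (simp add: algebra_simps)
    then have "N (x + int L *s z) + K x * N z = N (x + int (K x) *s z) + L * N z"
      using shift[of "x + int L *s z" "K x"] shift[of "x + int (K x) *s z" L] that K by metis
    then have "int (N (x + int L *s z)) + int (K x) * int (N z)
        = int (N (x + int (K x) *s z)) + int L * int (N z)"
      by (metis of_nat_add of_nat_mult)
    then show ?thesis
      unfolding T_def by linarith
  qed
  have "T (x + y) = T x + T y" for x y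
  proof -
    have eq: "(x + y) + int (K x + K y) *s z = (x + int (K x) *s z) + (y + int (K y) *s z)"
      by (simp add: algebra_simps vector_sadd_rdistrib)
    have "T (x + y) = int (N ((x + y) + int (K x + K y) *s z)) - int (K x + K y) * int (N z)"
      using closed[OF K[of x] K[of y]] unfolding eq[symmetric] by (rule T)
    also have "\<dots> = T x + T y"
      unfolding eq add[OF K K] T_def by (simp add: algebra_simps)
    finally show ?thesis .
  qed
  moreover have "T a = int (N a)" if "a \<in> S" for a
    using T[of a 0] that by simp
  ultimately show ?thesis
    by blast
qed

section \<open>Rays and Demazure roots of a strongly convex cone\<close>

lemma ray_generator_in_face:
  assumes "\<sigma> \<inter> {u. pair_QQ m u = 0} = {t *s ivec_to_rat \<rho> |t. t \<ge> 0}"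
  shows "ivec_to_rat \<rho> \<in> \<sigma>" "pair_QQ m (ivec_to_rat \<rho>) = 0"
proof -
  have "1 *s ivec_to_rat \<rho> \<in> {t *s ivec_to_rat \<rho> |t. t \<ge> 0}"
    by (intro CollectI exI[of _ 1]) simp
  then show "ivec_to_rat \<rho> \<in> \<sigma>" "pair_QQ m (ivec_to_rat \<rho>) = 0"
    unfolding assms[symmetric] by auto
qed

lemma ray_in_cone: "is_ray \<sigma> \<rho> \<Longrightarrow> ivec_to_rat \<rho> \<in> \<sigma>"
  unfolding is_ray_def using ray_generator_in_face(1) by blast

lemma ray_pair_MN_nonneg:
  assumes "m \<in> dual_lattice_points \<sigma>" "is_ray \<sigma> \<rho>"
  shows "pair_MN m \<rho> \<ge> 0"
proof -
  have "pair_QQ (ivec_to_rat m) (ivec_to_rat \<rho>) \<ge> 0"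
    using assms(1) ray_in_cone[OF assms(2)] unfolding dual_lattice_points_def pair_MNQ_eq by blast
  then show ?thesis
    unfolding of_int_pair_MN[symmetric] by simp
qed

locale minimal_cone =
  fixes G \<sigma> :: "(rat^'n) set"
  assumes finite_generators: "finite G" and cone_eq: "\<sigma> = gen_cone G"
    and strongly_convex: "strongly_convex \<sigma>"
    and minimal: "\<forall>g\<in>G. g \<notin> gen_cone (G - {g})"
begin

abbreviation S where "S \<equiv> dual_lattice_points \<sigma>"

lemma generator_in_cone: "g \<in> G \<Longrightarrow> g \<in> \<sigma>"
  using finite_generators cone_eq generator_in_gen_cone by auto

lemma zero_notin_generators: "0 \<notin> G"
  using minimal zero_in_gen_cone by metis

lemma mem_S_iff: "m \<in> S \<longleftrightarrow> (\<forall>g\<in>G. pair_QQ (ivec_to_rat m) g \<ge> 0)"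
  using dual_lattice_points_gen_cone_iff[OF finite_generators] cone_eq by simp

lemma S_pair_nonneg: "m \<in> S \<Longrightarrow> u \<in> \<sigma> \<Longrightarrow> pair_QQ (ivec_to_rat m) u \<ge> 0"
  unfolding dual_lattice_points_def pair_MNQ_eq by blast

lemma exists_multiple_in_S:
  assumes "\<forall>g\<in>G. pair_QQ m g \<ge> 0"
  obtains K :: int and w where "K > 0" "ivec_to_rat w = of_int K *s m" "w \<in> S"
proof -
  obtain K :: int and w where K: "K > 0" "ivec_to_rat w = of_int K *s m"
    using exists_int_multiple_lattice by blast
  then have "w \<in> S"
    unfolding mem_S_iff using assms by (simp add: pair_QQ_scale_left)
  then show thesis
    using K that by blast
qed

lemma ray_of_generator:
  assumes g: "g \<in> G"
  obtains \<rho> t m where "is_ray \<sigma> \<rho>" "t > 0" "g = t *s ivec_to_rat \<rho>"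
    "\<forall>x\<in>G. pair_QQ m x \<ge> 0" "pair_QQ m g = 0" "\<forall>h\<in>G - {g}. pair_QQ m h > 0"
proof -
  obtain \<rho> t where \<rho>: "primitive \<rho>" "t > 0" "g = t *s ivec_to_rat \<rho>"
    using nonzero_eq_pos_multiple_primitive g zero_notin_generators by metis
  obtain m where m: "\<forall>x\<in>G. pair_QQ m x \<ge> 0" "pair_QQ m g = 0" "\<forall>h\<in>G - {g}. pair_QQ m h > 0"
    using exposing_functional[OF finite_generators strongly_convex[unfolded cone_eq] minimal g]
    by blast
  have "{s *s g |s. s \<ge> 0} = {s *s ivec_to_rat \<rho> |s. s \<ge> 0}"
  proof (intro equalityI subsetI)
    fix u
    assume "u \<in> {s *s g |s. s \<ge> 0}"
    then obtain s where "s \<ge> 0" "u = (s * t) *s ivec_to_rat \<rho>"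
      using \<rho>(3) by (auto simp: vector_smult_assoc)
    then show "u \<in> {s *s ivec_to_rat \<rho> |s. s \<ge> 0}"
      using \<rho>(2) by auto
  next
    fix u
    assume "u \<in> {s *s ivec_to_rat \<rho> |s. s \<ge> 0}"
    then obtain s where "s \<ge> 0" "u = (s / t) *s g"
      using \<rho>(2,3) by (auto simp: vector_smult_assoc)
    then show "u \<in> {s *s g |s. s \<ge> 0}"
      using \<rho>(2) by auto
  qed
  then have "\<sigma> \<inter> {u. pair_QQ m u = 0} = {s *s ivec_to_rat \<rho> |s. s \<ge> 0}"
    using gen_cone_face_exposed_generator[OF finite_generators g m] cone_eq by simp
  moreover have "m \<in> dual_cone \<sigma>"
    unfolding dual_cone_def cone_eq using m(1) gen_cone_pair_nonneg by blast
  ultimately have "is_ray \<sigma> \<rho>"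
    unfolding is_ray_def using \<rho>(1) by blast
  then show thesis
    using that \<rho> m by blast
qed

lemma demazure_root_shift_mem:
  assumes root: "demazure_root \<sigma> e \<rho>" and m: "m \<in> S" and i: "0 \<le> i" "i \<le> pair_MN m \<rho>"
  shows "m + i *s e \<in> S"
  unfolding mem_S_iff
proof
  fix g
  assume "g \<in> G"
  then obtain \<rho>' t where \<rho>': "is_ray \<sigma> \<rho>'" "t > 0" "g = t *s ivec_to_rat \<rho>'"
    by (rule ray_of_generator)
  have "pair_MN (m + i *s e) \<rho>' \<ge> 0"
  proof (cases "\<rho>' = \<rho>")
    case True
    then show ?thesis
      using root i unfolding demazure_root_def by (simp add: pair_MN_linear)
  next
    case False
    then have "pair_MN e \<rho>' \<ge> 0"
      using root \<rho>'(1) unfolding demazure_root_def by blast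
    then show ?thesis
      using ray_pair_MN_nonneg[OF m \<rho>'(1)] i by (simp add: pair_MN_linear)
  qed
  then have "pair_QQ (ivec_to_rat (m + i *s e)) (ivec_to_rat \<rho>') \<ge> 0"
    by (metis of_int_pair_MN of_int_0_le_iff)
  then show "pair_QQ (ivec_to_rat (m + i *s e)) g \<ge> 0"
    using \<rho>' by (simp add: pair_QQ_scale_right)
qed

lemma exists_dual_point_exposing_ray:
  assumes "is_ray \<sigma> \<rho>"
  obtains z where "z \<in> S" "pair_MN z \<rho> = 0"
    "\<And>g. g \<in> G \<Longrightarrow> pair_QQ (ivec_to_rat z) g = 0 \<Longrightarrow> \<exists>s\<ge>0. g = s *s ivec_to_rat \<rho>"
    "\<And>g. g \<in> G \<Longrightarrow> pair_QQ (ivec_to_rat z) g \<ge> 0"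
proof -
  obtain m where m: "m \<in> dual_cone \<sigma>"
    "\<sigma> \<inter> {u. pair_QQ m u = 0} = {s *s ivec_to_rat \<rho> |s. s \<ge> 0}"
    using assms unfolding is_ray_def by blast
  have m_nonneg: "\<forall>g\<in>G. pair_QQ m g \<ge> 0"
    using m(1) generator_in_cone unfolding dual_cone_def by blast
  obtain K :: int and z where K: "K > 0" "ivec_to_rat z = of_int K *s m" "z \<in> S"
    using exists_multiple_in_S[OF m_nonneg] by blast
  have z_pair: "pair_QQ (ivec_to_rat z) u = of_int K * pair_QQ m u" for u
    using K(2) by (simp add: pair_QQ_scale_left)
  have "pair_MN z \<rho> = 0"
    using of_int_pair_MN[of z \<rho>] z_pair ray_generator_in_face(2)[OF m(2)] by simp
  moreover have "\<exists>s\<ge>0. g = s *s ivec_to_rat \<rho>" if "g \<in> G" "pair_QQ (ivec_to_rat z) g = 0" for g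
  proof -
    have "g \<in> \<sigma> \<inter> {u. pair_QQ m u = 0}"
      using that z_pair K(1) generator_in_cone by simp
    then show ?thesis
      unfolding m(2) by blast
  qed
  moreover have "pair_QQ (ivec_to_rat z) g \<ge> 0" if "g \<in> G" for g
    using that K(3) mem_S_iff by blast
  ultimately show thesis
    using that K(3) by blast
qed

lemma demazure_root_exists_pair_one:
  assumes root: "demazure_root \<sigma> e \<rho>"
  shows "\<exists>m\<in>S. pair_MN m \<rho> = 1"
proof -
  obtain z where z: "z \<in> S" "pair_MN z \<rho> = 0"
    "\<And>g. g \<in> G \<Longrightarrow> pair_QQ (ivec_to_rat z) g = 0 \<Longrightarrow> \<exists>s\<ge>0. g = s *s ivec_to_rat \<rho>"
    "\<And>g. g \<in> G \<Longrightarrow> pair_QQ (ivec_to_rat z) g \<ge> 0"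
    using root unfolding demazure_root_def by (metis exists_dual_point_exposing_ray)
  have e\<rho>: "pair_MN e \<rho> = -1"
    using root unfolding demazure_root_def by blast
  obtain L :: nat where L: "\<forall>g\<in>G. pair_QQ (ivec_to_rat z) g > 0 \<longrightarrow>
      pair_QQ (ivec_to_rat e) g \<le> of_nat L * pair_QQ (ivec_to_rat z) g"
    using exists_nat_multiple_dominates[OF finite_generators] by blast
  have "int L *s z - e \<in> S"
    unfolding mem_S_iff
  proof
    fix g
    assume g: "g \<in> G"
    show "pair_QQ (ivec_to_rat (int L *s z - e)) g \<ge> 0"
    proof (cases "pair_QQ (ivec_to_rat z) g = 0")
      case True
      then obtain s where s: "s \<ge> 0" "g = s *s ivec_to_rat \<rho>"
        using z(3) g by blast
      have "pair_QQ (ivec_to_rat (int L *s z - e)) g = s * of_int (pair_MN (int L *s z - e) \<rho>)"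
        unfolding s(2) of_int_pair_MN by (simp add: pair_QQ_scale_right)
      also have "\<dots> = s"
        using z(2) e\<rho> by (simp add: pair_MN_linear)
      finally show ?thesis
        using s(1) by simp
    next
      case False
      then show ?thesis
        using L g z(4)[OF g] by (simp add: ivec_to_rat_linear pair_QQ_linear)
    qed
  qed
  moreover have "pair_MN (int L *s z - e) \<rho> = 1"
    using z(2) e\<rho> by (simp add: pair_MN_linear)
  ultimately show ?thesis
    by blast
qed

lemma exists_absorbing_point: "\<exists>z\<in>S. \<forall>x. \<exists>K::nat. x + int K *s z \<in> S"
proof -
  obtain m where m: "\<forall>g\<in>G. pair_QQ m g > 0"
    using interior_functional[OF finite_generators strongly_convex[unfolded cone_eq]
        zero_notin_generators] by blast
  then obtain K :: int and z where K: "K > 0" "ivec_to_rat z = of_int K *s m" "z \<in> S"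
    using exists_multiple_in_S[of m] by (auto simp: less_imp_le)
  have z_pos: "pair_QQ (ivec_to_rat z) g > 0" if "g \<in> G" for g
    using K m that by (simp add: pair_QQ_scale_left)
  have "\<exists>L::nat. x + int L *s z \<in> S" for x
  proof -
    obtain L :: nat where L: "\<forall>g\<in>G. pair_QQ (ivec_to_rat z) g > 0 \<longrightarrow>
        pair_QQ (- ivec_to_rat x) g \<le> of_nat L * pair_QQ (ivec_to_rat z) g"
      using exists_nat_multiple_dominates[OF finite_generators] by blast
    have "x + int L *s z \<in> S"
      unfolding mem_S_iff using L z_pos
      by (force simp: ivec_to_rat_linear pair_QQ_linear)
    then show ?thesis
      by blast
  qed
  then show ?thesis
    using K(3) by blast
qed

lemma mem_cone_if_pair_MN_nonneg:
  assumes "\<forall>a\<in>S. pair_MN a v \<ge> 0"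
  shows "ivec_to_rat v \<in> \<sigma>"
proof (rule ccontr)
  assume "ivec_to_rat v \<notin> \<sigma>"
  then obtain y where y: "\<forall>g\<in>G. pair_QQ y g \<ge> 0" "pair_QQ y (ivec_to_rat v) < 0"
    using farkas_gen_cone[OF finite_generators] cone_eq by blast
  obtain K :: int and w where w: "K > 0" "ivec_to_rat w = of_int K *s y" "w \<in> S"
    using exists_multiple_in_S[OF y(1)] by blast
  have "of_int (pair_MN w v) = of_int K * pair_QQ y (ivec_to_rat v)"
    using w(2) by (simp add: of_int_pair_MN pair_QQ_scale_left)
  also have "\<dots> < 0"
    using w(1) y(2) by (simp add: mult_pos_neg)
  finally show False
    using assms w(3) by force
qed

text \<open>Here and below, \<open>v\<close> is the candidate for the distinguished ray: each \<open>w \<in> S\<close> may be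
  moved by \<open>\<langle>w, v\<rangle>\<close> steps of \<open>e\<close> without leaving \<open>S\<close>. Testing this at a lattice multiple \<open>w\<close> of
  \<open>m\<close> gives \<open>0 \<le> \<langle>w + \<langle>w, v\<rangle> e, u\<rangle> = \<langle>w, v\<rangle> \<langle>e, u\<rangle>\<close>.\<close>

lemma shift_pair_nonneg_on_face:
  assumes shift: "\<And>w. w \<in> S \<Longrightarrow> w + pair_MN w v *s e \<in> S"
    and m: "\<forall>g\<in>G. pair_QQ m g \<ge> 0" "pair_QQ m (ivec_to_rat v) > 0"
    and u: "u \<in> \<sigma>" "pair_QQ m u = 0"
  shows "pair_QQ (ivec_to_rat e) u \<ge> 0"
proof -
  obtain K :: int and w where w: "K > 0" "ivec_to_rat w = of_int K *s m" "w \<in> S"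
    using exists_multiple_in_S[OF m(1)] by blast
  have "of_int (pair_MN w v) = of_int K * pair_QQ m (ivec_to_rat v)"
    using w(2) by (simp add: of_int_pair_MN pair_QQ_scale_left)
  then have pos: "(of_int (pair_MN w v) :: rat) > 0"
    using w(1) m(2) by simp
  have "0 \<le> pair_QQ (ivec_to_rat (w + pair_MN w v *s e)) u"
    using S_pair_nonneg[OF shift[OF w(3)] u(1)] .
  also have "\<dots> = of_int (pair_MN w v) * pair_QQ (ivec_to_rat e) u"
    using w(2) u(2) by (simp add: ivec_to_rat_add ivec_to_rat_scale pair_QQ_linear)
  finally show ?thesis
    using pos by (simp add: zero_le_mult_iff)
qed

lemma shift_vector_pos_multiple_of_ray:
  assumes shift: "\<And>w. w \<in> S \<Longrightarrow> pair_MN w v \<ge> 0 \<and> w + pair_MN w v *s e \<in> S"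
    and ev: "pair_MN e v = -1"
  obtains \<rho> r where "is_ray \<sigma> \<rho>" "r > 0" "ivec_to_rat v = r *s ivec_to_rat \<rho>"
proof -
  have shift_mem: "\<And>w. w \<in> S \<Longrightarrow> w + pair_MN w v *s e \<in> S"
    using shift by blast
  have "ivec_to_rat v \<in> \<sigma>"
    using mem_cone_if_pair_MN_nonneg shift by blast
  then obtain c where c: "\<forall>g\<in>G. c g \<ge> 0" "ivec_to_rat v = (\<Sum>g\<in>G. c g *s g)"
    unfolding cone_eq by (rule gen_coneE)
  have "(\<Sum>g\<in>G. c g * pair_QQ (ivec_to_rat e) g) = -1"
    using ev of_int_pair_MN[of e v] unfolding c(2) by (simp add: pair_QQ_linear)
  then have "(\<Sum>g\<in>G. c g * pair_QQ (ivec_to_rat e) g) < 0"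
    by simp
  then obtain g0 where g0: "g0 \<in> G" "c g0 > 0" "pair_QQ (ivec_to_rat e) g0 < 0"
    using sum_mult_neg_imp_neg_factor[OF c(1)] by blast
  obtain \<rho> t m where r: "is_ray \<sigma> \<rho>" "t > 0" "g0 = t *s ivec_to_rat \<rho>"
    and m: "\<forall>x\<in>G. pair_QQ m x \<ge> 0" "pair_QQ m g0 = 0" "\<forall>h\<in>G - {g0}. pair_QQ m h > 0"
    using ray_of_generator[OF g0(1)] by blast
  have "c h = 0" if h: "h \<in> G - {g0}" for h
  proof (rule ccontr)
    assume "c h \<noteq> 0"
    then have "c h * pair_QQ m h > 0"
      using c(1) h m(3) by (simp add: less_le)
    moreover have "c h * pair_QQ m h \<le> (\<Sum>x\<in>G. c x * pair_QQ m x)"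
      by (rule member_le_sum) (use h finite_generators c(1) m(1) in auto)
    ultimately have "pair_QQ m (ivec_to_rat v) > 0"
      unfolding c(2) by (simp add: pair_QQ_linear)
    then have "pair_QQ (ivec_to_rat e) g0 \<ge> 0"
      using shift_pair_nonneg_on_face[OF shift_mem m(1) _ generator_in_cone[OF g0(1)] m(2)] by blast
    then show False
      using g0(3) by simp
  qed
  then have "(\<Sum>x\<in>G - {g0}. c x *s x) = 0"
    by (intro sum.neutral) auto
  then have "ivec_to_rat v = (c g0 * t) *s ivec_to_rat \<rho>"
    using c(2) g0(1) finite_generators r(3) by (simp add: sum.remove vector_smult_assoc)
  moreover have "c g0 * t > 0"
    using g0(2) r(2) by simp
  ultimately show thesis
    using that r(1) by blast
qed

lemma shift_vector_is_ray:
  assumes shift: "\<And>w. w \<in> S \<Longrightarrow> pair_MN w v \<ge> 0 \<and> w + pair_MN w v *s e \<in> S"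
    and ev: "pair_MN e v = -1"
  shows "is_ray \<sigma> v"
proof -
  obtain \<rho> r where r: "is_ray \<sigma> \<rho>" "r > 0" "ivec_to_rat v = r *s ivec_to_rat \<rho>"
    using shift_vector_pos_multiple_of_ray[OF assms] by blast
  have "(-1 :: rat) = pair_QQ (ivec_to_rat e) (ivec_to_rat v)"
    using ev of_int_pair_MN[of e v] by simp
  also have "\<dots> = r * of_int (pair_MN e \<rho>)"
    unfolding r(3) by (simp add: pair_QQ_scale_right of_int_pair_MN)
  finally have rj: "r * of_int (pair_MN e \<rho>) = -1" ..
  have "pair_MN e \<rho> < 0"
  proof (rule ccontr)
    assume "\<not> pair_MN e \<rho> < 0"
    then have "r * of_int (pair_MN e \<rho>) \<ge> 0"
      using r(2) by simp
    then show False
      using rj by simp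
  qed
  have "ivec_to_rat \<rho> = (1 / r) *s ivec_to_rat v"
    using r(2,3) by (simp add: vector_smult_assoc)
  also have "1 / r = of_int (- pair_MN e \<rho>)"
    using rj r(2) by (simp add: field_simps)
  finally have "ivec_to_rat \<rho> = ivec_to_rat ((- pair_MN e \<rho>) *s v)"
    by (simp add: ivec_to_rat_scale)
  then have "\<rho> = (- pair_MN e \<rho>) *s v"
    by (simp only: ivec_to_rat_inject)
  then have "\<bar>- pair_MN e \<rho>\<bar> = 1"
    using r(1) unfolding is_ray_def primitive_def by blast
  then have "\<rho> = v"
    using \<open>\<rho> = (- pair_MN e \<rho>) *s v\<close> \<open>pair_MN e \<rho> < 0\<close> by simp
  then show ?thesis
    using r(1) by simp
qed

lemma shift_vector_pair_nonneg_other_rays: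
  assumes shift: "\<And>w. w \<in> S \<Longrightarrow> pair_MN w v \<ge> 0 \<and> w + pair_MN w v *s e \<in> S"
    and v: "is_ray \<sigma> v" and \<rho>: "is_ray \<sigma> \<rho>" "\<rho> \<noteq> v"
  shows "pair_MN e \<rho> \<ge> 0"
proof -
  obtain m where m: "m \<in> dual_cone \<sigma>"
    "\<sigma> \<inter> {u. pair_QQ m u = 0} = {s *s ivec_to_rat \<rho> |s. s \<ge> 0}"
    using \<rho>(1) unfolding is_ray_def by blast
  have m_nonneg: "pair_QQ m u \<ge> 0" if "u \<in> \<sigma>" for u
    using m(1) that unfolding dual_cone_def by blast
  have "pair_QQ m (ivec_to_rat v) \<noteq> 0"
  proof
    assume "pair_QQ m (ivec_to_rat v) = 0"
    then have "ivec_to_rat v \<in> \<sigma> \<inter> {u. pair_QQ m u = 0}"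
      using ray_in_cone[OF v] by simp
    then obtain s where s: "s \<ge> 0" "ivec_to_rat v = s *s ivec_to_rat \<rho>"
      unfolding m(2) by blast
    moreover have "v \<noteq> 0"
      using v unfolding is_ray_def primitive_def by blast
    ultimately have "s > 0"
      by (cases "s = 0") auto
    then show False
      using primitive_pos_multiple_eq s(2) v \<rho> unfolding is_ray_def by metis
  qed
  then have "pair_QQ m (ivec_to_rat v) > 0"
    using m_nonneg[OF ray_in_cone[OF v]] by simp
  moreover have "pair_QQ m (ivec_to_rat \<rho>) = 0"
    using ray_generator_in_face(2)[OF m(2)] .
  moreover have "\<forall>g\<in>G. pair_QQ m g \<ge> 0"
    using m_nonneg generator_in_cone by blast
  moreover have "\<And>w. w \<in> S \<Longrightarrow> w + pair_MN w v *s e \<in> S"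
    using shift by blast
  ultimately have "pair_QQ (ivec_to_rat e) (ivec_to_rat \<rho>) \<ge> 0"
    using shift_pair_nonneg_on_face ray_in_cone[OF \<rho>(1)] by blast
  then show ?thesis
    unfolding of_int_pair_MN[symmetric] by simp
qed

lemma degree_eq_root_pairing:
  fixes N :: "int^'n \<Rightarrow> nat"
  assumes add: "\<And>a b. a \<in> S \<Longrightarrow> b \<in> S \<Longrightarrow> N (a + b) = N a + N b"
    and shift: "\<And>a. a \<in> S \<Longrightarrow> a + int (N a) *s e \<in> S \<and> N (a + int (N a) *s e) = 0"
    and a0: "a0 \<in> S" "N a0 > 0"
  shows "\<exists>\<rho>. demazure_root \<sigma> e \<rho> \<and> (\<forall>a\<in>S. int (N a) = pair_MN a \<rho>)"
proof -
  obtain z where "z \<in> S" "\<And>x. \<exists>K::nat. x + int K *s z \<in> S"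
    using exists_absorbing_point by blast
  then obtain T where "\<forall>x y. T (x + y) = T x + T y" "\<forall>a\<in>S. T a = int (N a)"
    using additive_extends_from_absorbing_monoid[of S N z] add dual_lattice_points_add by blast
  then obtain v where Nv: "\<And>a. a \<in> S \<Longrightarrow> int (N a) = pair_MN a v"
    using additive_eq_pair_MN[of T] by metis
  have "0 = int (N (a0 + int (N a0) *s e))"
    using shift[OF a0(1)] by simp
  also have "\<dots> = int (N a0) * (1 + pair_MN e v)"
    using Nv[of "a0 + int (N a0) *s e"] Nv[OF a0(1)] shift[OF a0(1)]
    by (simp add: pair_MN_linear algebra_simps)
  finally have ev: "pair_MN e v = -1"
    using a0(2) by simp
  have v_shift: "pair_MN w v \<ge> 0 \<and> w + pair_MN w v *s e \<in> S" if "w \<in> S" for w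
    using shift[OF that] Nv[OF that] by simp
  have "is_ray \<sigma> v"
    using shift_vector_is_ray v_shift ev by blast
  then have "demazure_root \<sigma> e v"
    unfolding demazure_root_def using ev shift_vector_pair_nonneg_other_rays v_shift by blast
  then show ?thesis
    using Nv by blast
qed

end

section \<open>Homogeneous higher derivations of semigroup algebras\<close>

lemma single_eq_single_iff: "Poly_Mapping.single x c = Poly_Mapping.single x d \<longleftrightarrow> c = d"
  using inj_single[of x] by (simp add: inj_eq)

lemma single_eq_0_iff: "Poly_Mapping.single x c = 0 \<longleftrightarrow> c = 0"
  using single_eq_single_iff[of x c 0] by simp

lemma keys_subset_singleton_imp_single:
  assumes "Poly_Mapping.keys f \<subseteq> {x}"
  shows "f = Poly_Mapping.single x (Poly_Mapping.lookup f x)"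
proof (rule poly_mapping_eqI)
  fix y
  show "Poly_Mapping.lookup f y = Poly_Mapping.lookup (Poly_Mapping.single x (Poly_Mapping.lookup f x)) y"
    using assms by (cases "y = x") (auto simp: lookup_single in_keys_iff)
qed

lemma sum_single: "(\<Sum>j\<in>A. Poly_Mapping.single x (f j)) = Poly_Mapping.single x (\<Sum>j\<in>A. f j)"
  by (induction A rule: infinite_finite_induct) (auto simp: single_add)

lemma poly_mapping_eq_sum_single:
  "f = (\<Sum>m\<in>Poly_Mapping.keys f. Poly_Mapping.single m (Poly_Mapping.lookup f m))"
proof (rule poly_mapping_eqI)
  fix k
  have "Poly_Mapping.lookup (\<Sum>m\<in>Poly_Mapping.keys f. Poly_Mapping.single m (Poly_Mapping.lookup f m)) k
      = (\<Sum>m\<in>Poly_Mapping.keys f. if m = k then Poly_Mapping.lookup f m else 0)"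
    by (simp add: lookup_sum lookup_single when_def)
  also have "\<dots> = Poly_Mapping.lookup f k"
    by (simp add: sum.delta' in_keys_iff)
  finally show "Poly_Mapping.lookup f k
      = Poly_Mapping.lookup (\<Sum>m\<in>Poly_Mapping.keys f. Poly_Mapping.single m (Poly_Mapping.lookup f m)) k"
    by simp
qed

lemma mult_eq_sum_single:
  "f * g = (\<Sum>m\<in>Poly_Mapping.keys f. \<Sum>m'\<in>Poly_Mapping.keys g.
     Poly_Mapping.single (m + m') (Poly_Mapping.lookup f m * Poly_Mapping.lookup g m'))"
  by (subst poly_mapping_eq_sum_single[of f], subst poly_mapping_eq_sum_single[of g])
    (simp add: sum_product mult_single)

lemma scal_single: "scal c (Poly_Mapping.single x b) = Poly_Mapping.single x (c * b)"
  unfolding scal_def by (simp add: mult_single)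

lemma lookup_scal: "Poly_Mapping.lookup (scal c f) k = c * Poly_Mapping.lookup f k"
  unfolding scal_def mult_map_scale_conv_mult[symmetric]
  by (simp add: Poly_Mapping.map.rep_eq when_def)

lemma scal_sum: "scal c (\<Sum>j\<in>J. g j) = (\<Sum>j\<in>J. scal c (g j))"
  unfolding scal_def by (simp add: sum_distrib_left)

lemma chi_mult: "chi a * chi b = (chi (a + b) :: int^'n \<Rightarrow>\<^sub>0 'k::field)"
  unfolding chi_def by (simp add: mult_single)

lemma chi_in_semigroup_alg: "m \<in> S \<Longrightarrow> (chi m :: int^'n \<Rightarrow>\<^sub>0 'k::field) \<in> semigroup_alg S"
  unfolding chi_def semigroup_alg_def by simp

lemma semigroup_alg_eq_sum_chi:
  "f = (\<Sum>m\<in>Poly_Mapping.keys f. scal (Poly_Mapping.lookup f m) (chi m))"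
  by (subst poly_mapping_eq_sum_single) (simp add: scal_single chi_def)

lemma sum_scal_chi_in_semigroup_alg:
  assumes "A \<subseteq> S"
  shows "(\<Sum>m\<in>A. scal (c m) (chi m) :: int^'n \<Rightarrow>\<^sub>0 'k::field) \<in> semigroup_alg S"
proof -
  have "Poly_Mapping.keys (\<Sum>m\<in>A. scal (c m) (chi m) :: int^'n \<Rightarrow>\<^sub>0 'k)
      \<subseteq> (\<Union>m\<in>A. Poly_Mapping.keys (scal (c m) (chi m) :: int^'n \<Rightarrow>\<^sub>0 'k))"
    by (rule keys_sum)
  also have "\<dots> \<subseteq> S"
    using assms by (auto simp: scal_single chi_def split: if_splits)
  finally show ?thesis
    unfolding semigroup_alg_def by simp
qed

lemma coeff_one_plus_linear_power: "coeff ([:1, l:] ^ n) i = l ^ i * of_nat (n choose i)"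
proof (cases "i \<le> n")
  case True
  then show ?thesis
    by (simp add: coeff_linear_poly_power mult.commute)
next
  case False
  have "degree ([:1, l:] ^ n) \<le> n"
    using degree_power_le[of "[:1, l:]" n] by (simp split: if_splits)
  then show ?thesis
    using False by (simp add: coeff_eq_0 binomial_eq_0)
qed

locale homogeneous_lfihd =
  fixes S :: "(int^'n) set"
    and D :: "nat \<Rightarrow> (int^'n \<Rightarrow>\<^sub>0 'k::field) \<Rightarrow> (int^'n \<Rightarrow>\<^sub>0 'k)"
    and e :: "int^'n"
  assumes zero_mem: "0 \<in> S" and add_mem: "\<And>a b. a \<in> S \<Longrightarrow> b \<in> S \<Longrightarrow> a + b \<in> S"
    and lfihd: "LFIHD S D" and homogeneous: "homogeneous_of_degree S D e"
begin

lemma D_closed: "f \<in> semigroup_alg S \<Longrightarrow> D i f \<in> semigroup_alg S"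
  using lfihd unfolding LFIHD_def by blast

lemma D_add: "f \<in> semigroup_alg S \<Longrightarrow> g \<in> semigroup_alg S \<Longrightarrow> D i (f + g) = D i f + D i g"
  using lfihd unfolding LFIHD_def by blast

lemma D_scal: "f \<in> semigroup_alg S \<Longrightarrow> D i (scal c f) = scal c (D i f)"
  using lfihd unfolding LFIHD_def by blast

lemma D_0: "f \<in> semigroup_alg S \<Longrightarrow> D 0 f = f"
  using lfihd unfolding LFIHD_def by blast

lemma D_mult:
  "f \<in> semigroup_alg S \<Longrightarrow> g \<in> semigroup_alg S \<Longrightarrow> D i (f * g) = (\<Sum>j\<le>i. D j f * D (i - j) g)"
  using lfihd unfolding LFIHD_def by blast

lemma D_locally_finite: "f \<in> semigroup_alg S \<Longrightarrow> finite {i. D i f \<noteq> 0}"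
  using lfihd unfolding LFIHD_def by blast

lemma D_iterative:
  "f \<in> semigroup_alg S \<Longrightarrow> D i (D j f) = scal (of_nat ((i + j) choose i)) (D (i + j) f)"
  using lfihd unfolding LFIHD_def by blast

lemma D_eq_sum_chi:
  assumes "f \<in> semigroup_alg S"
  shows "D i f = (\<Sum>m\<in>Poly_Mapping.keys f. scal (Poly_Mapping.lookup f m) (D i (chi m)))"
proof -
  have "D i (\<Sum>m\<in>A. scal (Poly_Mapping.lookup f m) (chi m))
      = (\<Sum>m\<in>A. scal (Poly_Mapping.lookup f m) (D i (chi m)))" if "finite A" "A \<subseteq> S" for A
    using that
  proof (induction A rule: finite_induct)
    case empty
    show ?case
      using D_add[of 0 0 i] by (simp add: semigroup_alg_def)
  next
    case (insert x A)
    then have "x \<in> S" "A \<subseteq> S"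
      by simp_all
    have "D i (scal (Poly_Mapping.lookup f x) (chi x) + (\<Sum>m\<in>A. scal (Poly_Mapping.lookup f m) (chi m)))
        = D i (scal (Poly_Mapping.lookup f x) (chi x))
          + D i (\<Sum>m\<in>A. scal (Poly_Mapping.lookup f m) (chi m))"
      using \<open>x \<in> S\<close> \<open>A \<subseteq> S\<close>
      by (intro D_add sum_scal_chi_in_semigroup_alg[of "{x}", simplified]) (auto intro: sum_scal_chi_in_semigroup_alg)
    then show ?case
      using insert.hyps insert.IH \<open>A \<subseteq> S\<close> D_scal[OF chi_in_semigroup_alg[OF \<open>x \<in> S\<close>]]
      by simp
  qed
  moreover have "Poly_Mapping.keys f \<subseteq> S"
    using assms unfolding semigroup_alg_def by simp
  ultimately have "D i (\<Sum>m\<in>Poly_Mapping.keys f. scal (Poly_Mapping.lookup f m) (chi m))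
      = (\<Sum>m\<in>Poly_Mapping.keys f. scal (Poly_Mapping.lookup f m) (D i (chi m)))"
    by simp
  then show ?thesis
    by (simp only: semigroup_alg_eq_sum_chi[symmetric])
qed

text \<open>\<open>dcoeff i m\<close>, \<open>dpoly m\<close> and \<open>ddeg m\<close> are the \<open>a\<^sub>i(m)\<close>, \<open>P\<^sub>m\<close> and \<open>N(m)\<close> of the proof idea.\<close>

definition dcoeff :: "nat \<Rightarrow> int^'n \<Rightarrow> 'k" where
  "dcoeff i m = Poly_Mapping.lookup (D i (chi m)) (m + int i *s e)"

lemma D_chi: "m \<in> S \<Longrightarrow> D i (chi m) = Poly_Mapping.single (m + int i *s e) (dcoeff i m)"
  unfolding dcoeff_def using homogeneous unfolding homogeneous_of_degree_def
  by (blast intro: keys_subset_singleton_imp_single)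

lemma dcoeff_0: "m \<in> S \<Longrightarrow> dcoeff 0 m = 1"
  using D_0[OF chi_in_semigroup_alg] by (simp add: dcoeff_def chi_def)

lemma dcoeff_nonzero_imp_mem:
  assumes "m \<in> S" "dcoeff i m \<noteq> 0"
  shows "m + int i *s e \<in> S"
  using D_closed[OF chi_in_semigroup_alg[OF assms(1)], of i] assms
  unfolding semigroup_alg_def D_chi[OF assms(1)] by simp

lemma finite_dcoeff_support: "m \<in> S \<Longrightarrow> finite {i. dcoeff i m \<noteq> 0}"
  using D_locally_finite[OF chi_in_semigroup_alg] by (simp add: D_chi single_eq_0_iff)

lemma dcoeff_add:
  assumes m: "m \<in> S" and m': "m' \<in> S"
  shows "dcoeff i (m + m') = (\<Sum>j\<le>i. dcoeff j m * dcoeff (i - j) m')"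
proof -
  have "D i (chi (m + m')) = (\<Sum>j\<le>i. D j (chi m) * D (i - j) (chi m'))"
    using D_mult[OF chi_in_semigroup_alg[OF m] chi_in_semigroup_alg[OF m']] by (simp add: chi_mult)
  also have "\<dots> = (\<Sum>j\<le>i. Poly_Mapping.single (m + m' + int i *s e) (dcoeff j m * dcoeff (i - j) m'))"
  proof (rule sum.cong[OF refl])
    fix j
    assume "j \<in> {..i}"
    then have shift: "m + int j *s e + (m' + int (i - j) *s e) = m + m' + int i *s e"
      by (simp add: vec_eq_iff of_nat_diff algebra_simps)
    show "D j (chi m) * D (i - j) (chi m')
        = Poly_Mapping.single (m + m' + int i *s e) (dcoeff j m * dcoeff (i - j) m')"
      unfolding D_chi[OF m] D_chi[OF m'] mult_single shift ..
  qed
  finally show ?thesis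
    unfolding D_chi[OF add_mem[OF m m']] sum_single single_eq_single_iff .
qed

lemma dcoeff_iterative:
  assumes m: "m \<in> S" and nonzero: "dcoeff j m \<noteq> 0"
  shows "dcoeff j m * dcoeff i (m + int j *s e) = of_nat ((i + j) choose i) * dcoeff (i + j) m"
proof -
  have mj: "m + int j *s e \<in> S"
    using dcoeff_nonzero_imp_mem[OF m nonzero] .
  have "D j (chi m) = scal (dcoeff j m) (chi (m + int j *s e))"
    using D_chi[OF m] by (simp add: chi_def scal_single)
  then have "scal (dcoeff j m) (D i (chi (m + int j *s e)))
      = scal (of_nat ((i + j) choose i)) (D (i + j) (chi m))"
    using D_iterative[OF chi_in_semigroup_alg[OF m], of i j]
      D_scal[OF chi_in_semigroup_alg[OF mj]] by simp
  moreover have "m + int j *s e + int i *s e = m + int (i + j) *s e"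
    by (simp add: vec_eq_iff algebra_simps)
  ultimately show ?thesis
    unfolding D_chi[OF mj] D_chi[OF m] scal_single by (simp add: single_eq_single_iff)
qed

definition dpoly :: "int^'n \<Rightarrow> 'k poly" where
  "dpoly m = Abs_poly (\<lambda>i. dcoeff i m)"

lemma coeff_dpoly: "m \<in> S \<Longrightarrow> coeff (dpoly m) i = dcoeff i m"
  unfolding dpoly_def using finite_dcoeff_support
  by (subst Abs_poly_inverse) (auto simp: MOST_iff_cofinite)

lemma dpoly_add: "m \<in> S \<Longrightarrow> m' \<in> S \<Longrightarrow> dpoly (m + m') = dpoly m * dpoly m'"
  by (rule poly_eqI) (simp add: coeff_dpoly add_mem coeff_mult dcoeff_add)

lemma dpoly_nonzero: "m \<in> S \<Longrightarrow> dpoly m \<noteq> 0"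
  using coeff_dpoly[of m 0] dcoeff_0 by (metis coeff_0 one_neq_zero)

lemma dpoly_zero: "dpoly 0 = 1"
  using dpoly_add[OF zero_mem zero_mem] dpoly_nonzero[OF zero_mem] by simp

lemma nat_scale_mem: "m \<in> S \<Longrightarrow> int k *s m \<in> S"
proof (induction k)
  case (Suc k)
  have "int (Suc k) *s m = m + int k *s m"
    by (simp add: vector_sadd_rdistrib)
  then show ?case
    using add_mem Suc by simp
qed (simp add: zero_mem)

lemma dpoly_nat_scale: "m \<in> S \<Longrightarrow> dpoly (int k *s m) = dpoly m ^ k"
proof (induction k)
  case (Suc k)
  have "int (Suc k) *s m = m + int k *s m"
    by (simp add: vector_sadd_rdistrib)
  then show ?case
    using Suc dpoly_add[OF Suc.prems nat_scale_mem[OF Suc.prems]] by simp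
qed (simp add: dpoly_zero)

definition ddeg :: "int^'n \<Rightarrow> nat" where
  "ddeg m = degree (dpoly m)"

lemma ddeg_add: "m \<in> S \<Longrightarrow> m' \<in> S \<Longrightarrow> ddeg (m + m') = ddeg m + ddeg m'"
  unfolding ddeg_def using dpoly_add dpoly_nonzero by (simp add: degree_mult_eq)

lemma dcoeff_ddeg_nonzero: "m \<in> S \<Longrightarrow> dcoeff (ddeg m) m \<noteq> 0"
  using leading_coeff_neq_0[OF dpoly_nonzero] coeff_dpoly unfolding ddeg_def by metis

lemma dcoeff_above_ddeg: "m \<in> S \<Longrightarrow> ddeg m < i \<Longrightarrow> dcoeff i m = 0"
  using coeff_eq_0[of "dpoly m" i] coeff_dpoly unfolding ddeg_def by metis

lemma shift_by_ddeg_mem: "m \<in> S \<Longrightarrow> m + int (ddeg m) *s e \<in> S"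
  using dcoeff_nonzero_imp_mem dcoeff_ddeg_nonzero by blast

text \<open>By iterativity, \<open>a\<^sub>N(m) a\<^sub>i(m + N e)\<close> is a multiple of \<open>a\<^sub>i\<^sub>+\<^sub>N(m)\<close>, which vanishes for
  \<open>i > 0\<close> when \<open>N = deg P\<^sub>m\<close>.\<close>

lemma dpoly_shift_by_ddeg: "m \<in> S \<Longrightarrow> dpoly (m + int (ddeg m) *s e) = 1"
proof (rule poly_eqI)
  fix i
  assume m: "m \<in> S"
  have mN: "m + int (ddeg m) *s e \<in> S"
    using shift_by_ddeg_mem[OF m] .
  show "coeff (dpoly (m + int (ddeg m) *s e)) i = coeff 1 i"
  proof (cases i)
    case 0
    then show ?thesis
      using dcoeff_0[OF mN] coeff_dpoly[OF mN] by simp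
  next
    case (Suc k)
    have "dcoeff (ddeg m) m * dcoeff i (m + int (ddeg m) *s e)
        = of_nat ((i + ddeg m) choose i) * dcoeff (i + ddeg m) m"
      using dcoeff_iterative[OF m dcoeff_ddeg_nonzero[OF m]] .
    also have "dcoeff (i + ddeg m) m = 0"
      using dcoeff_above_ddeg[OF m] Suc by simp
    finally show ?thesis
      using dcoeff_ddeg_nonzero[OF m] coeff_dpoly[OF mN] Suc by simp
  qed
qed

lemma ddeg_shift_by_ddeg: "m \<in> S \<Longrightarrow> ddeg (m + int (ddeg m) *s e) = 0"
  using dpoly_shift_by_ddeg unfolding ddeg_def by simp

lemma dpoly_of_ddeg_one:
  assumes "m \<in> S" "ddeg m = 1"
  shows "dpoly m = [:1, dcoeff 1 m:]"
proof (rule poly_eqI)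
  fix i
  show "coeff (dpoly m) i = coeff [:1, dcoeff 1 m:] i"
    using assms dcoeff_0 dcoeff_above_ddeg[OF assms(1), of i]
    by (cases i) (auto simp: coeff_dpoly coeff_pCons split: nat.split)
qed

text \<open>Since \<open>m + N(m) (m\<^sub>1 + e) = (m + N(m) e) + N(m) m\<^sub>1\<close> and both shifted points have
  polynomial 1, multiplicativity forces \<open>P(m) = P(m\<^sub>1)\<^sup>N\<^sup>(\<^sup>m\<^sup>)\<close>.\<close>

lemma dpoly_eq_power:
  assumes m1: "m1 \<in> S" "ddeg m1 = 1" and m: "m \<in> S"
  shows "dpoly m = [:1, dcoeff 1 m1:] ^ ddeg m"
proof -
  define n where "n = ddeg m"
  have "m1 + e \<in> S"
    using shift_by_ddeg_mem[OF m1(1)] m1(2) by simp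
  have "dpoly (m + int n *s (m1 + e)) = dpoly m * dpoly (m1 + e) ^ n"
    using dpoly_add[OF m nat_scale_mem[OF \<open>m1 + e \<in> S\<close>]] dpoly_nat_scale[OF \<open>m1 + e \<in> S\<close>] by simp
  also have "dpoly (m1 + e) = 1"
    using dpoly_shift_by_ddeg[OF m1(1)] m1(2) by simp
  finally have "dpoly (m + int n *s (m1 + e)) = dpoly m"
    by simp
  moreover have "m + int n *s (m1 + e) = (m + int n *s e) + int n *s m1"
    by (simp add: vec_eq_iff algebra_simps)
  moreover have "dpoly ((m + int n *s e) + int n *s m1) = dpoly (m + int n *s e) * dpoly m1 ^ n"
    using dpoly_add[OF shift_by_ddeg_mem[OF m] nat_scale_mem[OF m1(1)]] dpoly_nat_scale[OF m1(1)]
    unfolding n_def by simp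
  ultimately show ?thesis
    using dpoly_shift_by_ddeg[OF m] dpoly_of_ddeg_one[OF m1] unfolding n_def by simp
qed

lemma exists_pos_ddeg:
  assumes "\<not> trivial_HD S D"
  shows "\<exists>m\<in>S. ddeg m > 0"
proof (rule ccontr)
  assume "\<not> ?thesis"
  then have "D i (chi m) = 0" if "i > 0" "m \<in> S" for i m
    using that dcoeff_above_ddeg D_chi by fastforce
  then have "D i f = 0" if "i > 0" "f \<in> semigroup_alg S" for i f
    using that D_eq_sum_chi[OF that(2)] unfolding semigroup_alg_def by (auto intro!: sum.neutral simp: scal_def)
  then show False
    using assms unfolding trivial_HD_def by blast
qed

end

section \<open>The derivation attached to a Demazure root\<close>

definition reindex_weighted ::
  "('a \<Rightarrow> 'b) \<Rightarrow> ('a \<Rightarrow> 'k) \<Rightarrow> ('a \<Rightarrow>\<^sub>0 'k::field) \<Rightarrow> ('b \<Rightarrow>\<^sub>0 'k)" where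
  "reindex_weighted h w f =
     (\<Sum>m\<in>Poly_Mapping.keys f. Poly_Mapping.single (h m) (Poly_Mapping.lookup f m * w m))"

lemma reindex_weighted_eq_sum:
  assumes "finite A" "Poly_Mapping.keys f \<subseteq> A"
  shows "reindex_weighted h w f = (\<Sum>m\<in>A. Poly_Mapping.single (h m) (Poly_Mapping.lookup f m * w m))"
  unfolding reindex_weighted_def
  by (rule sum.mono_neutral_right[symmetric]) (use assms in \<open>auto simp: in_keys_iff\<close>)

lemma reindex_weighted_add: "reindex_weighted h w (f + g) = reindex_weighted h w f + reindex_weighted h w g"
proof -
  define A where "A = Poly_Mapping.keys f \<union> Poly_Mapping.keys g"
  have A: "finite A" "Poly_Mapping.keys (f + g) \<subseteq> A"
    unfolding A_def by (simp_all add: keys_add)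
  have fg: "Poly_Mapping.keys f \<subseteq> A" "Poly_Mapping.keys g \<subseteq> A"
    unfolding A_def by auto
  have "reindex_weighted h w (f + g)
      = (\<Sum>m\<in>A. Poly_Mapping.single (h m) (Poly_Mapping.lookup f m * w m))
        + (\<Sum>m\<in>A. Poly_Mapping.single (h m) (Poly_Mapping.lookup g m * w m))"
    unfolding reindex_weighted_eq_sum[OF A]
    by (simp add: lookup_add distrib_right single_add sum.distrib)
  also have "\<dots> = reindex_weighted h w f + reindex_weighted h w g"
    by (simp only: reindex_weighted_eq_sum[OF A(1) fg(1)] reindex_weighted_eq_sum[OF A(1) fg(2)])
  finally show ?thesis .
qed

lemma reindex_weighted_zero: "reindex_weighted h w 0 = 0"
  unfolding reindex_weighted_def by simp

lemma reindex_weighted_sum: "reindex_weighted h w (\<Sum>j\<in>J. g j) = (\<Sum>j\<in>J. reindex_weighted h w (g j))"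
  by (induction J rule: infinite_finite_induct) (simp_all add: reindex_weighted_add reindex_weighted_zero)

lemma reindex_weighted_single:
  "reindex_weighted h w (Poly_Mapping.single x b) = Poly_Mapping.single (h x) (b * w x)"
  by (cases "b = 0") (auto simp: reindex_weighted_def)

lemma reindex_weighted_scal: "reindex_weighted h w (scal c f) = scal c (reindex_weighted h w f)"
proof -
  have "Poly_Mapping.keys (scal c f) \<subseteq> Poly_Mapping.keys f"
    by (auto simp: in_keys_iff lookup_scal)
  then have "reindex_weighted h w (scal c f)
      = (\<Sum>m\<in>Poly_Mapping.keys f. Poly_Mapping.single (h m) (Poly_Mapping.lookup (scal c f) m * w m))"
    by (rule reindex_weighted_eq_sum[OF finite_keys])
  also have "\<dots> = scal c (reindex_weighted h w f)"
    unfolding reindex_weighted_def scal_sum by (simp add: lookup_scal scal_single mult.assoc)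
  finally show ?thesis .
qed

lemma keys_reindex_weighted:
  "Poly_Mapping.keys (reindex_weighted h w f) \<subseteq> {h m | m. m \<in> Poly_Mapping.keys f \<and> w m \<noteq> 0}"
proof -
  have "Poly_Mapping.keys (reindex_weighted h w f)
      \<subseteq> (\<Union>m\<in>Poly_Mapping.keys f. Poly_Mapping.keys (Poly_Mapping.single (h m) (Poly_Mapping.lookup f m * w m)))"
    unfolding reindex_weighted_def by (rule keys_sum)
  also have "\<dots> \<subseteq> {h m | m. m \<in> Poly_Mapping.keys f \<and> w m \<noteq> 0}"
    by (auto split: if_splits)
  finally show ?thesis .
qed

lemma choose_mult_choose_diff:
  assumes "j \<le> a"
  shows "(a choose j) * ((a - j) choose i) = ((i + j) choose i) * (a choose (i + j))"
proof (cases "i + j \<le> a")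
  case True
  have "(a choose (i + j)) * ((i + j) choose j) = (a choose j) * ((a - j) choose (i + j - j))"
    by (rule choose_mult) (use True in auto)
  moreover have "(i + j) choose j = (i + j) choose i"
    using binomial_symmetric[of j "i + j"] by simp
  ultimately show ?thesis
    by (simp add: mult.commute)
next
  case False
  then show ?thesis
    using assms by (simp add: binomial_eq_0)
qed

locale demazure_data =
  fixes S :: "(int^'n) set" and e \<rho> :: "int^'n" and c :: "'k::field"
  assumes pair_nonneg: "\<And>m. m \<in> S \<Longrightarrow> pair_MN m \<rho> \<ge> 0"
    and shift_mem: "\<And>m i. m \<in> S \<Longrightarrow> 0 \<le> i \<Longrightarrow> i \<le> pair_MN m \<rho> \<Longrightarrow> m + i *s e \<in> S"
    and pair_root: "pair_MN e \<rho> = -1"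
    and exists_pair_one: "\<exists>m\<in>S. pair_MN m \<rho> = 1"
    and nonzero: "c \<noteq> 0"
begin

definition root_weight :: "nat \<Rightarrow> int^'n \<Rightarrow> 'k" where
  "root_weight i m = c ^ i * of_nat (nat (pair_MN m \<rho>) choose i)"

definition root_derivation :: "nat \<Rightarrow> (int^'n \<Rightarrow>\<^sub>0 'k) \<Rightarrow> (int^'n \<Rightarrow>\<^sub>0 'k)" where
  "root_derivation i = reindex_weighted (\<lambda>m. m + int i *s e) (root_weight i)"

lemma root_derivation_chi: "root_derivation i (chi m) = scal (root_weight i m) (chi (m + int i *s e))"
  unfolding root_derivation_def chi_def by (simp add: reindex_weighted_single scal_single)

lemma root_derivation_eq_sum:
  "root_derivation i f = (\<Sum>m\<in>Poly_Mapping.keys f.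
     Poly_Mapping.single (m + int i *s e) (Poly_Mapping.lookup f m * root_weight i m))"
  unfolding root_derivation_def reindex_weighted_def ..

lemma root_weight_vandermonde:
  assumes "m \<in> S" "m' \<in> S"
  shows "(\<Sum>j\<le>i. root_weight j m * root_weight (i - j) m') = root_weight i (m + m')"
proof -
  define A where "A = nat (pair_MN m \<rho>)"
  define B where "B = nat (pair_MN m' \<rho>)"
  have AB: "nat (pair_MN (m + m') \<rho>) = A + B"
    unfolding A_def B_def pair_MN_add_left using pair_nonneg[OF assms(1)] pair_nonneg[OF assms(2)]
    by (simp add: nat_add_distrib)
  have "(\<Sum>j\<le>i. root_weight j m * root_weight (i - j) m')
      = (\<Sum>j\<le>i. c ^ i * of_nat ((A choose j) * (B choose (i - j))))"
  proof (rule sum.cong[OF refl])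
    fix j
    assume "j \<in> {..i}"
    then have "c ^ j * c ^ (i - j) = c ^ i"
      by (simp add: power_add[symmetric])
    then show "root_weight j m * root_weight (i - j) m' = c ^ i * of_nat ((A choose j) * (B choose (i - j)))"
      unfolding root_weight_def A_def B_def by (simp add: algebra_simps)
  qed
  also have "\<dots> = root_weight i (m + m')"
    unfolding root_weight_def AB vandermonde[symmetric] by (simp add: sum_distrib_left)
  finally show ?thesis .
qed

lemma root_weight_iterative:
  assumes "m \<in> S"
  shows "root_weight j m * root_weight i (m + int j *s e) = of_nat ((i + j) choose i) * root_weight (i + j) m"
proof (cases "j \<le> nat (pair_MN m \<rho>)")
  case True
  define A where "A = nat (pair_MN m \<rho>)"
  have "nat (pair_MN (m + int j *s e) \<rho>) = A - j"
    using True unfolding A_def by (simp add: pair_MN_linear pair_root nat_diff_distrib)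
  then have "root_weight j m * root_weight i (m + int j *s e)
      = c ^ (i + j) * of_nat ((A choose j) * ((A - j) choose i))"
    unfolding root_weight_def A_def[symmetric] by (simp add: power_add algebra_simps)
  also have "\<dots> = c ^ (i + j) * of_nat (((i + j) choose i) * (A choose (i + j)))"
    using True unfolding A_def by (simp only: choose_mult_choose_diff)
  also have "\<dots> = of_nat ((i + j) choose i) * root_weight (i + j) m"
    unfolding root_weight_def A_def[symmetric] by (simp add: algebra_simps)
  finally show ?thesis .
next
  case False
  then show ?thesis
    unfolding root_weight_def by (simp add: binomial_eq_0)
qed

lemma root_derivation_closed:
  assumes f: "f \<in> semigroup_alg S"
  shows "root_derivation i f \<in> semigroup_alg S"
  unfolding semigroup_alg_def
proof (intro CollectI subsetI)
  fix x
  assume "x \<in> Poly_Mapping.keys (root_derivation i f)"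
  then have "x \<in> {m + int i *s e | m. m \<in> Poly_Mapping.keys f \<and> root_weight i m \<noteq> 0}"
    using keys_reindex_weighted unfolding root_derivation_def by fast
  then obtain m where m: "x = m + int i *s e" "m \<in> Poly_Mapping.keys f" "root_weight i m \<noteq> 0"
    by blast
  have "m \<in> S"
    using f m(2) unfolding semigroup_alg_def by blast
  have "nat (pair_MN m \<rho>) choose i \<noteq> 0"
    using m(3) unfolding root_weight_def by (metis mult_zero_right of_nat_0)
  then have "int i \<le> pair_MN m \<rho>"
    using pair_nonneg[OF \<open>m \<in> S\<close>] by (simp add: binomial_eq_0_iff not_less le_nat_iff)
  then show "x \<in> S"
    using shift_mem[OF \<open>m \<in> S\<close>] m(1) by simp
qed

lemma root_derivation_0: "root_derivation 0 f = f"
  unfolding root_derivation_def reindex_weighted_def root_weight_def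
  using poly_mapping_eq_sum_single[of f] by simp

lemma root_derivation_mult:
  assumes f: "f \<in> semigroup_alg S" and g: "g \<in> semigroup_alg S"
  shows "root_derivation i (f * g) = (\<Sum>j\<le>i. root_derivation j f * root_derivation (i - j) g)"
proof -
  define F where "F = Poly_Mapping.keys f"
  define G where "G = Poly_Mapping.keys g"
  have FG: "F \<subseteq> S" "G \<subseteq> S"
    using f g unfolding F_def G_def semigroup_alg_def by auto
  let ?f = "Poly_Mapping.lookup f" and ?g = "Poly_Mapping.lookup g"
  have fg: "f * g = (\<Sum>m\<in>F. \<Sum>m'\<in>G. Poly_Mapping.single (m + m') (?f m * ?g m'))"
    unfolding F_def G_def by (rule mult_eq_sum_single)
  have "root_derivation i (f * g) = (\<Sum>m\<in>F. \<Sum>m'\<in>G.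
      Poly_Mapping.single (m + m' + int i *s e) (?f m * ?g m' * root_weight i (m + m')))"
    unfolding fg root_derivation_def reindex_weighted_sum reindex_weighted_single ..
  also have "\<dots> = (\<Sum>m\<in>F. \<Sum>m'\<in>G. \<Sum>j\<le>i. Poly_Mapping.single (m + m' + int i *s e)
      (?f m * root_weight j m * (?g m' * root_weight (i - j) m')))"
  proof (intro sum.cong refl)
    fix m m'
    assume "m \<in> F" "m' \<in> G"
    then have "m \<in> S" "m' \<in> S"
      using FG by auto
    then have "root_weight i (m + m') = (\<Sum>j\<le>i. root_weight j m * root_weight (i - j) m')"
      by (rule root_weight_vandermonde[symmetric])
    then have "?f m * ?g m' * root_weight i (m + m')
        = (\<Sum>j\<le>i. ?f m * root_weight j m * (?g m' * root_weight (i - j) m'))"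
      by (simp add: sum_distrib_left mult_ac)
    then show "Poly_Mapping.single (m + m' + int i *s e) (?f m * ?g m' * root_weight i (m + m'))
        = (\<Sum>j\<le>i. Poly_Mapping.single (m + m' + int i *s e)
            (?f m * root_weight j m * (?g m' * root_weight (i - j) m')))"
      by (simp add: sum_single)
  qed
  also have "\<dots> = (\<Sum>j\<le>i. \<Sum>m\<in>F. \<Sum>m'\<in>G. Poly_Mapping.single (m + m' + int i *s e)
      (?f m * root_weight j m * (?g m' * root_weight (i - j) m')))"
    by (simp add: sum.swap[of _ "{..i}"])
  also have "\<dots> = (\<Sum>j\<le>i. root_derivation j f * root_derivation (i - j) g)"
  proof (rule sum.cong[OF refl])
    fix j
    assume "j \<in> {..i}"
    then have shift: "m + int j *s e + (m' + int (i - j) *s e) = m + m' + int i *s e" for m m'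
      by (simp add: vec_eq_iff of_nat_diff algebra_simps)
    show "(\<Sum>m\<in>F. \<Sum>m'\<in>G. Poly_Mapping.single (m + m' + int i *s e)
        (?f m * root_weight j m * (?g m' * root_weight (i - j) m')))
        = root_derivation j f * root_derivation (i - j) g"
      unfolding root_derivation_eq_sum F_def[symmetric] G_def[symmetric] sum_product mult_single shift ..
  qed
  finally show ?thesis .
qed

lemma root_derivation_locally_finite: "finite {i. root_derivation i f \<noteq> 0}"
proof -
  define B where "B = (\<Sum>m\<in>Poly_Mapping.keys f. nat (pair_MN m \<rho>))"
  have "root_weight i m = 0" if "m \<in> Poly_Mapping.keys f" "B < i" for m i
  proof -
    have "nat (pair_MN m \<rho>) \<le> B"
      unfolding B_def by (rule member_le_sum) (use that in auto)
    then show ?thesis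
      unfolding root_weight_def using that(2) by (simp add: binomial_eq_0)
  qed
  then have "root_derivation i f = 0" if "B < i" for i
    unfolding root_derivation_eq_sum using that by (intro sum.neutral) simp
  then have "{i. root_derivation i f \<noteq> 0} \<subseteq> {..B}"
    by (auto simp: not_less[symmetric])
  then show ?thesis
    by (rule finite_subset) simp
qed

lemma root_derivation_iterative:
  assumes f: "f \<in> semigroup_alg S"
  shows "root_derivation i (root_derivation j f)
    = scal (of_nat ((i + j) choose i)) (root_derivation (i + j) f)"
proof -
  let ?f = "Poly_Mapping.lookup f"
  have "root_derivation i (root_derivation j f) = (\<Sum>m\<in>Poly_Mapping.keys f.
      Poly_Mapping.single (m + int j *s e + int i *s e) (?f m * root_weight j m * root_weight i (m + int j *s e)))"
    unfolding root_derivation_eq_sum[of j] unfolding root_derivation_def reindex_weighted_sum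
      reindex_weighted_single ..
  also have "\<dots> = (\<Sum>m\<in>Poly_Mapping.keys f. scal (of_nat ((i + j) choose i))
      (Poly_Mapping.single (m + int (i + j) *s e) (?f m * root_weight (i + j) m)))"
  proof (rule sum.cong[OF refl])
    fix m
    assume "m \<in> Poly_Mapping.keys f"
    then have "m \<in> S"
      using f unfolding semigroup_alg_def by blast
    have shift: "m + int j *s e + int i *s e = m + int (i + j) *s e"
      by (simp add: vec_eq_iff algebra_simps)
    have weight: "?f m * root_weight j m * root_weight i (m + int j *s e)
        = of_nat ((i + j) choose i) * (?f m * root_weight (i + j) m)"
      using root_weight_iterative[OF \<open>m \<in> S\<close>, of j i] by (simp add: mult_ac)
    show "Poly_Mapping.single (m + int j *s e + int i *s e)
          (?f m * root_weight j m * root_weight i (m + int j *s e))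
        = scal (of_nat ((i + j) choose i))
          (Poly_Mapping.single (m + int (i + j) *s e) (?f m * root_weight (i + j) m))"
      unfolding shift weight scal_single ..
  qed
  also have "\<dots> = scal (of_nat ((i + j) choose i)) (root_derivation (i + j) f)"
    unfolding root_derivation_eq_sum scal_sum ..
  finally show ?thesis .
qed

lemma LFIHD_root_derivation: "LFIHD S root_derivation"
  unfolding LFIHD_def
  using root_derivation_closed root_derivation_0 root_derivation_mult
    root_derivation_locally_finite root_derivation_iterative
  by (simp add: root_derivation_def reindex_weighted_add reindex_weighted_scal)

lemma root_derivation_nontrivial: "\<not> trivial_HD S root_derivation"
proof
  obtain m where m: "m \<in> S" "pair_MN m \<rho> = 1"
    using exists_pair_one by blast
  assume "trivial_HD S root_derivation"
  moreover have "(chi m :: int^'n \<Rightarrow>\<^sub>0 'k) \<in> semigroup_alg S"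
    using chi_in_semigroup_alg[OF m(1)] .
  ultimately have "root_derivation 1 (chi m) = 0"
    by (simp add: trivial_HD_def)
  moreover have "root_derivation 1 (chi m) = Poly_Mapping.single (m + e) c"
    unfolding root_derivation_chi root_weight_def using m(2) by (simp add: scal_single chi_def)
  ultimately show False
    using nonzero by (simp add: single_eq_0_iff)
qed

lemma homogeneous_root_derivation: "homogeneous_of_degree S root_derivation e"
  unfolding homogeneous_of_degree_def root_derivation_chi by (simp add: scal_single chi_def)

end

section \<open>Classification\<close>

context minimal_cone
begin

lemma homogeneous_lfihd_eq_root_derivation:
  fixes D :: "nat \<Rightarrow> (int^'n \<Rightarrow>\<^sub>0 'k::field) \<Rightarrow> (int^'n \<Rightarrow>\<^sub>0 'k)"
  assumes "LFIHD S D" "\<not> trivial_HD S D" "homogeneous_of_degree S D e"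
  shows "\<exists>\<rho> (c::'k). demazure_root \<sigma> e \<rho> \<and> c \<noteq> 0 \<and>
    (\<forall>i. \<forall>m\<in>S. D i (chi m) = scal (c ^ i * of_nat (nat (pair_MN m \<rho>) choose i)) (chi (m + int i *s e)))"
proof -
  interpret homogeneous_lfihd S D e
    using assms zero_in_dual_lattice_points dual_lattice_points_add by unfold_locales auto
  obtain m0 where "m0 \<in> S" "ddeg m0 > 0"
    using exists_pos_ddeg[OF assms(2)] by blast
  then obtain \<rho> where \<rho>: "demazure_root \<sigma> e \<rho>" "\<forall>a\<in>S. int (ddeg a) = pair_MN a \<rho>"
    using degree_eq_root_pairing[of ddeg e m0] ddeg_add shift_by_ddeg_mem ddeg_shift_by_ddeg by blast
  obtain m1 where m1: "m1 \<in> S" "pair_MN m1 \<rho> = 1"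
    using demazure_root_exists_pair_one[OF \<rho>(1)] by blast
  then have "ddeg m1 = 1"
    using \<rho>(2) by fastforce
  then have "dcoeff 1 m1 \<noteq> 0"
    using dcoeff_ddeg_nonzero[OF m1(1)] by simp
  moreover have "D i (chi m) = scal (dcoeff 1 m1 ^ i * of_nat (nat (pair_MN m \<rho>) choose i))
      (chi (m + int i *s e))" if "m \<in> S" for i m
  proof -
    have "dcoeff i m = dcoeff 1 m1 ^ i * of_nat (ddeg m choose i)"
      using coeff_dpoly[OF that, of i] dpoly_eq_power[OF m1(1) \<open>ddeg m1 = 1\<close> that]
      by (simp add: coeff_one_plus_linear_power)
    moreover have "ddeg m = nat (pair_MN m \<rho>)"
      using \<rho>(2) that by (metis nat_int)
    ultimately show ?thesis
      using D_chi[OF that] by (simp add: scal_single chi_def)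
  qed
  ultimately show ?thesis
    using \<rho>(1) by blast
qed

lemma root_derivation_exists:
  assumes root: "demazure_root \<sigma> e \<rho>" and "c \<noteq> 0"
  shows "\<exists>D :: nat \<Rightarrow> (int^'n \<Rightarrow>\<^sub>0 'k::field) \<Rightarrow> (int^'n \<Rightarrow>\<^sub>0 'k).
    LFIHD S D \<and> \<not> trivial_HD S D \<and> homogeneous_of_degree S D e \<and>
    (\<forall>i. \<forall>m\<in>S. D i (chi m) = scal (c ^ i * of_nat (nat (pair_MN m \<rho>) choose i)) (chi (m + int i *s e)))"
proof -
  interpret demazure_data S e \<rho> c
  proof
    show "pair_MN m \<rho> \<ge> 0" if "m \<in> S" for m
      using ray_pair_MN_nonneg[OF that] root unfolding demazure_root_def by blast
    show "pair_MN e \<rho> = -1"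
      using root unfolding demazure_root_def by blast
  qed (use demazure_root_shift_mem[OF root] demazure_root_exists_pair_one[OF root] \<open>c \<noteq> 0\<close> in auto)
  show ?thesis
    using LFIHD_root_derivation root_derivation_nontrivial homogeneous_root_derivation
    by (intro exI[of _ root_derivation]) (simp add: root_derivation_chi root_weight_def)
qed

end

theorem theorem5p4p5:
  fixes \<sigma> :: "(rat^'n) set"
  assumes "polyhedral_cone \<sigma>" and "strongly_convex \<sigma>" and "\<sigma> \<noteq> {0}"
  shows "(\<forall>D :: nat \<Rightarrow> (int^'n \<Rightarrow>\<^sub>0 'k::field) \<Rightarrow> (int^'n \<Rightarrow>\<^sub>0 'k).
            LFIHD (dual_lattice_points \<sigma>) D \<and> \<not> trivial_HD (dual_lattice_points \<sigma>) D \<and>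
            (\<exists>e. homogeneous_of_degree (dual_lattice_points \<sigma>) D e) \<longrightarrow>
            (\<exists>e \<rho> (c::'k). demazure_root \<sigma> e \<rho> \<and> c \<noteq> 0 \<and>
               (\<forall>i. \<forall>m\<in>dual_lattice_points \<sigma>.
                  D i (chi m) = scal (c ^ i * of_nat (nat (pair_MN m \<rho>) choose i)) (chi (m + int i *s e)))))
       \<and> (\<forall>e \<rho> (c::'k). demazure_root \<sigma> e \<rho> \<and> c \<noteq> 0 \<longrightarrow>
            (\<exists>D :: nat \<Rightarrow> (int^'n \<Rightarrow>\<^sub>0 'k) \<Rightarrow> (int^'n \<Rightarrow>\<^sub>0 'k).
               LFIHD (dual_lattice_points \<sigma>) D \<and> \<not> trivial_HD (dual_lattice_points \<sigma>) D \<and>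
               homogeneous_of_degree (dual_lattice_points \<sigma>) D e \<and>
               (\<forall>i. \<forall>m\<in>dual_lattice_points \<sigma>.
                  D i (chi m) = scal (c ^ i * of_nat (nat (pair_MN m \<rho>) choose i)) (chi (m + int i *s e)))))"
proof -
  obtain G0 where "finite G0" "\<sigma> = gen_cone G0"
    using assms(1) unfolding polyhedral_cone_iff by blast
  moreover obtain G where "G \<subseteq> G0" "gen_cone G = gen_cone G0" "\<forall>g\<in>G. g \<notin> gen_cone (G - {g})"
    using exists_minimal_generators[OF \<open>finite G0\<close>] by blast
  ultimately interpret minimal_cone G \<sigma>
    using assms(2) finite_subset by unfold_locales auto
  show ?thesis
  proof (intro conjI allI impI)
    fix D :: "nat \<Rightarrow> (int^'n \<Rightarrow>\<^sub>0 'k) \<Rightarrow> (int^'n \<Rightarrow>\<^sub>0 'k)"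
    assume "LFIHD S D \<and> \<not> trivial_HD S D \<and> (\<exists>e. homogeneous_of_degree S D e)"
    then show "\<exists>e \<rho> (c::'k). demazure_root \<sigma> e \<rho> \<and> c \<noteq> 0 \<and>
        (\<forall>i. \<forall>m\<in>S. D i (chi m) = scal (c ^ i * of_nat (nat (pair_MN m \<rho>) choose i)) (chi (m + int i *s e)))"
      using homogeneous_lfihd_eq_root_derivation by blast
  qed (use root_derivation_exists in blast)
qed

end
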